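(* Let $a>0$. For every $\psi\in\mathcal D[0,\infty)$, set $\bar\phi\doteq\Lambda_a(\Gamma_0(\psi))$ and $\bar\eta\doteq\bar\phi-\psi$. Then $(\bar\phi,\bar\eta)$ solves the Skorokhod problem on $[0,a]$ for $\psi$. Consequently $\Gamma_{0,a}=\Lambda_a\circ\Gamma_0$ on $\mathcal D[0,\infty)$.
   Context: $\mathcal D[0,\infty)$ is the space of right-continuous functions $[0,\infty)\to\mathbb R$ with left limits; $\mathcal I[0,\infty)$ and $\mathcal{BV}[0,\infty)$ are its subsets of nondecreasing functions and of functions of bounded variation on every compact interval. Notation: $x^+=\max(x,0)$, $x\wedge y=\min(x,y)$. The map $\Gamma_0:\mathcal D[0,\infty)\to\mathcal D[0,\infty)$ is $\Gamma_0(\psi)(t)=\psi(t)+\sup_{s\in[0,t]}[-\psi(s)]^+$. For $a>0$, $\Lambda_a:\mathcal D[0,\infty)\to\mathcal D[0,\infty)$ is $\Lambda_a(\phi)(t)=\phi(t)-\sup_{s\in[0,t]}\big[(\phi(s)-a)^+\wedge\inf_{u\in[s,t]}\phi(u)\big]$. Skorokhod problem on $[0,a]$ for $\psi\in\mathcal D[0,\infty)$: a pair $(\bar\phi,\bar\eta)\in\mathcal D[0,\infty)\times\mathcal{BV}[0,\infty)$ such that (1) $\bar\phi(t)=\psi(t)+\bar\eta(t)\in[0,a]$ for all $t\ge0$; (2) $\bar\eta=\bar\eta_\ell-\bar\eta_u$ with $\bar\eta_\ell,\bar\eta_u\in\mathcal I[0,\infty)$, $\bar\eta_\ell(0),\bar\eta_u(0)\ge0$,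 using the convention $\bar\eta(0-)=\bar\eta_\ell(0-)=\bar\eta_u(0-)=0$ (so the associated Lebesgue–Stieltjes measures on $[0,\infty)$ may have an atom at $0$), and $\int_{[0,\infty)}\mathbb I_{\{\bar\phi(s)>0\}}\,d\bar\eta_\ell(s)=0$, $\int_{[0,\infty)}\mathbb I_{\{\bar\phi(s)<a\}}\,d\bar\eta_u(s)=0$. Such a solution exists and is unique; $\Gamma_{0,a}(\psi)$ denotes its first component $\bar\phi$. *)

theory Defs
  imports "HOL-Analysis.Analysis"
begin

text \<open>Functions on [0,oo) are represented as real => real; only values at t >= 0 matter.\<close>

definition cadlag :: "(real \<Rightarrow> real) \<Rightarrow> bool" where
  "cadlag f \<longleftrightarrow> (\<forall>t\<ge>0. continuous (at_right t) f) \<and>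
                  (\<forall>t>0. \<exists>l. (f \<longlongrightarrow> l) (at_left t))"

definition nondecr :: "(real \<Rightarrow> real) \<Rightarrow> bool" where
  "nondecr f \<longleftrightarrow> cadlag f \<and> mono_on {0..} f"

definition bv :: "(real \<Rightarrow> real) \<Rightarrow> bool" where
  "bv f \<longleftrightarrow> cadlag f \<and> (\<forall>T\<ge>0. \<exists>B. \<forall>n (s::nat \<Rightarrow> real).
       s 0 = 0 \<and> s n = T \<and> (\<forall>i<n. s i \<le> s (Suc i)) \<longrightarrow>
       (\<Sum>i<n. \<bar>f (s (Suc i)) - f (s i)\<bar>) \<le> B)"

text \<open>Extension by 0 to negative times: encodes the convention F(0-) = 0,
  so the Lebesgue-Stieltjes measure of F on [0,oo) may have an atom F(0) at 0.\<close>
definition ext0 :: "(real \<Rightarrow> real) \<Rightarrow> real \<Rightarrow> real" where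
  "ext0 F t = (if t < 0 then 0 else F t)"

definition LS_null :: "(real \<Rightarrow> real) \<Rightarrow> real set \<Rightarrow> bool" where
  "LS_null F A \<longleftrightarrow> A \<in> sets borel \<and> emeasure (interval_measure (ext0 F)) A = 0"

definition Gamma0 :: "(real \<Rightarrow> real) \<Rightarrow> real \<Rightarrow> real" where
  "Gamma0 \<psi> t = \<psi> t + (SUP s\<in>{0..t}. max (- \<psi> s) 0)"

definition Lambda :: "real \<Rightarrow> (real \<Rightarrow> real) \<Rightarrow> real \<Rightarrow> real" where
  "Lambda a \<phi> t = \<phi> t -
     (SUP s\<in>{0..t}. min (max (\<phi> s - a) 0) (INF u\<in>{s..t}. \<phi> u))"

definition skorokhod :: "real \<Rightarrow> (real \<Rightarrow> real) \<Rightarrow> (real \<Rightarrow> real) \<Rightarrow> (real \<Rightarrow> real) \<Rightarrow> bool" where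
  "skorokhod a \<psi> \<phi> \<eta> \<longleftrightarrow> cadlag \<phi> \<and> bv \<eta> \<and>
     (\<forall>t\<ge>0. \<phi> t = \<psi> t + \<eta> t \<and> 0 \<le> \<phi> t \<and> \<phi> t \<le> a) \<and>
     (\<exists>\<eta>l \<eta>u. nondecr \<eta>l \<and> nondecr \<eta>u \<and> \<eta>l 0 \<ge> 0 \<and> \<eta>u 0 \<ge> 0 \<and>
        (\<forall>t\<ge>0. \<eta> t = \<eta>l t - \<eta>u t) \<and>
        LS_null \<eta>l {s. 0 \<le> s \<and> \<phi> s > 0} \<and>
        LS_null \<eta>u {s. 0 \<le> s \<and> \<phi> s < a})"

definition Gamma0a :: "real \<Rightarrow> (real \<Rightarrow> real) \<Rightarrow> real \<Rightarrow> real" where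
  "Gamma0a a \<psi> t = (THE x. \<exists>\<phi> \<eta>. skorokhod a \<psi> \<phi> \<eta> \<and> \<phi> t = x)"

end

theory Submission
  imports Defs
begin

(* Rather than exhibiting the Lebesgue-Stieltjes decomposition of etabar directly, we prove an
   abstract criterion (locale sp_criterion): if x is cadlag with values in [0,a] and eta is a
   cadlag function that is nonincreasing on every interval where x stays away from 0,
   nondecreasing on every interval where x stays away from a, satisfies the matching one-sided
   conditions at jumps and at time 0, then eta_u = (-eta 0)^+ + (downward variation of eta on
   [0,t]) and eta_l = eta + eta_u give a decomposition as required by the Skorokhod problem. *)


fun dvar :: "(real \<Rightarrow> real) \<Rightarrow> real list \<Rightarrow> real" where
  "dvar f (x # y # l) = max (f x - f y) 0 + dvar f (y # l)"
| "dvar f _ = 0"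

lemma dvar_Cons: "dvar f (x # l) = (case l of [] \<Rightarrow> 0 | y # _ \<Rightarrow> max (f x - f y) 0) + dvar f l"
  by (cases l) auto

lemma dvar_nonneg: "0 \<le> dvar f l"
  by (induction f l rule: dvar.induct) auto

lemma dvar_append: "dvar f (xs @ v # ys) = dvar f (xs @ [v]) + dvar f (v # ys)"
proof (induction xs)
  case Nil
  then show ?case by simp
next
  case (Cons x xs)
  then show ?case by (cases xs) (auto simp: dvar_Cons)
qed

lemma dvar_const_points: "\<forall>x\<in>set l. x = c \<Longrightarrow> dvar f l = 0"
  by (induction f l rule: dvar.induct) auto

definition is_partition :: "real \<Rightarrow> real \<Rightarrow> real list \<Rightarrow> bool" where
  "is_partition u v l \<longleftrightarrow> l \<noteq> [] \<and> hd l = u \<and> last l = v \<and> sorted l"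

lemma partition_two: "u \<le> v \<Longrightarrow> is_partition u v [u, v]"
  by (auto simp: is_partition_def)

lemma sorted_le_last: "sorted (l::real list) \<Longrightarrow> x \<in> set l \<Longrightarrow> x \<le> last l"
proof (induction l)
  case Nil
  then show ?case by simp
next
  case (Cons y l)
  show ?case
  proof (cases "l = []")
    case True
    then show ?thesis using Cons.prems by simp
  next
    case False
    have "y \<le> last l" using Cons.prems(1) False last_in_set by auto
    then show ?thesis using Cons False by auto
  qed
qed

lemma partition_mem: "is_partition u v l \<Longrightarrow> x \<in> set l \<Longrightarrow> u \<le> x \<and> x \<le> v"
  unfolding is_partition_def using sorted_le_last by (cases l) auto

lemma dvar_degenerate_partition: "is_partition u u l \<Longrightarrow> dvar f l = 0"
  by (rule dvar_const_points) (use partition_mem in fastforce)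

lemma partition_append:
  assumes "is_partition u v l1" "is_partition v w l2"
  shows "is_partition u w (l1 @ tl l2) \<and> dvar f (l1 @ tl l2) = dvar f l1 + dvar f l2"
proof -
  obtain r where l2: "l2 = v # r"
    using assms(2) unfolding is_partition_def by (metis hd_Cons_tl)
  have l1: "l1 = butlast l1 @ [v]"
    using assms(1) unfolding is_partition_def by (metis append_butlast_last_id)
  have dvar_sum: "dvar f (l1 @ tl l2) = dvar f l1 + dvar f l2"
    using dvar_append[of f "butlast l1" v r] l1 l2
    by (metis append.assoc append_Cons append_Nil list.sel(3))
  have "sorted (l1 @ r)"
  proof -
    have "sorted l1" "sorted r" using assms l2 unfolding is_partition_def by auto
    moreover have "\<forall>x\<in>set l1. \<forall>y\<in>set r. x \<le> y"
      using partition_mem[OF assms(1)] assms(2) l2 unfolding is_partition_def by fastforce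
    ultimately show ?thesis by (simp add: sorted_append)
  qed
  moreover have "last (l1 @ r) = w"
    using assms l2 unfolding is_partition_def by (cases "r = []") auto
  moreover have "hd (l1 @ r) = u" "l1 @ r \<noteq> []" using assms(1) unfolding is_partition_def by auto
  ultimately have "is_partition u w (l1 @ tl l2)"
    unfolding is_partition_def l2 by simp
  then show ?thesis using dvar_sum by blast
qed

lemma partition_split:
  assumes "is_partition u w l" "u \<le> v" "v \<le> w"
  shows "\<exists>l1 l2. is_partition u v l1 \<and> is_partition v w l2 \<and> dvar f l \<le> dvar f l1 + dvar f l2"
  using assms
proof (induction l arbitrary: u)
  case Nil
  then show ?case by (simp add: is_partition_def)
next
  case (Cons y r)
  have y: "y = u" using Cons.prems unfolding is_partition_def by simp
  show ?case
  proof (cases "r = []")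
    case True
    then have "u = w" "v = u" using Cons.prems y unfolding is_partition_def by auto
    then show ?thesis using y True by (intro exI[of _ "[u]"]) (auto simp: is_partition_def)
  next
    case False
    then obtain c r' where r: "r = c # r'" by (cases r) auto
    have part_r: "is_partition c w r" using Cons.prems(1) unfolding is_partition_def r by simp
    have uc: "u \<le> c" using Cons.prems(1) y unfolding is_partition_def r by simp
    show ?thesis
    proof (cases "c \<le> v")
      case True
      from Cons.IH[OF part_r True Cons.prems(3)] obtain l1 l2 where
        split: "is_partition c v l1" "is_partition v w l2" "dvar f r \<le> dvar f l1 + dvar f l2"
        by blast
      have "l1 \<noteq> []" "hd l1 = c" "last l1 = v" "sorted l1"
        using split(1) unfolding is_partition_def by auto
      moreover have "\<forall>x\<in>set l1. u \<le> x" using partition_mem[OF split(1)] uc by force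
      ultimately have "is_partition u v (u # l1)" unfolding is_partition_def by simp
      moreover have "dvar f (u # l1) = max (f u - f c) 0 + dvar f l1"
        using \<open>l1 \<noteq> []\<close> \<open>hd l1 = c\<close> by (cases l1) auto
      moreover have "dvar f (y # r) = max (f u - f c) 0 + dvar f r" using r y by simp
      ultimately show ?thesis using split by (metis add_left_mono add.assoc)
    next
      case False
      have "\<forall>x\<in>set r. v \<le> x" using partition_mem[OF part_r] False by force
      then have "is_partition v w (v # r)" using part_r unfolding is_partition_def by (auto simp: r)
      moreover have "max (f u - f c) 0 \<le> max (f u - f v) 0 + max (f v - f c) 0"
        unfolding max_def by auto
      then have "dvar f (y # r) \<le> dvar f [u, v] + dvar f (v # r)" unfolding y r by simp
      ultimately show ?thesis using partition_two[OF Cons.prems(2)] by blast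
    qed
  qed
qed

definition dvar_bounded :: "(real \<Rightarrow> real) \<Rightarrow> real \<Rightarrow> real \<Rightarrow> bool" where
  "dvar_bounded f u v \<longleftrightarrow> (\<exists>B. \<forall>l. is_partition u v l \<longrightarrow> dvar f l \<le> B)"

definition down_var :: "(real \<Rightarrow> real) \<Rightarrow> real \<Rightarrow> real \<Rightarrow> real" where
  "down_var f u v = Sup (dvar f ` {l. is_partition u v l})"

lemma dvar_le_down_var: "dvar_bounded f u v \<Longrightarrow> is_partition u v l \<Longrightarrow> dvar f l \<le> down_var f u v"
  unfolding down_var_def dvar_bounded_def by (rule cSup_upper) (auto simp: bdd_above_def)

lemma down_var_le:
  "u \<le> v \<Longrightarrow> (\<And>l. is_partition u v l \<Longrightarrow> dvar f l \<le> B) \<Longrightarrow> down_var f u v \<le> B"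
  unfolding down_var_def by (rule cSup_least) (use partition_two[of u v] in auto)

lemma down_var_ge_drop: "dvar_bounded f u v \<Longrightarrow> u \<le> v \<Longrightarrow> max (f u - f v) 0 \<le> down_var f u v"
  using dvar_le_down_var[of f u v "[u,v]"] partition_two[of u v] by simp

lemma down_var_nonneg: "dvar_bounded f u v \<Longrightarrow> u \<le> v \<Longrightarrow> 0 \<le> down_var f u v"
  using down_var_ge_drop[of f u v] by linarith

lemma dvar_bounded_point: "dvar_bounded f u u"
  unfolding dvar_bounded_def using dvar_degenerate_partition by (intro exI[of _ 0]) auto

lemma down_var_point: "down_var f u u = 0"
proof -
  have "down_var f u u \<le> 0" by (rule down_var_le) (auto simp: dvar_degenerate_partition)
  moreover have "0 \<le> down_var f u u" by (rule down_var_nonneg[OF dvar_bounded_point]) simp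
  ultimately show ?thesis by simp
qed

lemma dvar_bounded_subinterval:
  assumes "dvar_bounded f u w" "u \<le> v" "v \<le> w"
  shows "dvar_bounded f u v \<and> dvar_bounded f v w"
proof -
  obtain B where B: "\<And>l. is_partition u w l \<Longrightarrow> dvar f l \<le> B"
    using assms(1) unfolding dvar_bounded_def by blast
  have "dvar f l \<le> B" if "is_partition u v l" for l
    using partition_append[OF that partition_two[OF assms(3)], of f] B dvar_nonneg[of f "[v, w]"]
    by fastforce
  moreover have "dvar f l \<le> B" if "is_partition v w l" for l
    using partition_append[OF partition_two[OF assms(2)] that, of f] B dvar_nonneg[of f "[u, v]"]
    by fastforce
  ultimately show ?thesis unfolding dvar_bounded_def by blast
qed

lemma dvar_bounded_join:
  assumes "dvar_bounded f u v" "dvar_bounded f v w" "u \<le> v" "v \<le> w"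
  shows "dvar_bounded f u w"
proof -
  obtain B1 B2 where B1: "\<And>l. is_partition u v l \<Longrightarrow> dvar f l \<le> B1"
    and B2: "\<And>l. is_partition v w l \<Longrightarrow> dvar f l \<le> B2"
    using assms(1,2) unfolding dvar_bounded_def by blast
  have "dvar f l \<le> B1 + B2" if "is_partition u w l" for l
    using partition_split[OF that assms(3,4), of f] B1 B2 by (fastforce intro: order_trans)
  then show ?thesis unfolding dvar_bounded_def by blast
qed

lemma down_var_add:
  assumes "dvar_bounded f u w" "u \<le> v" "v \<le> w"
  shows "down_var f u w = down_var f u v + down_var f v w"
proof -
  have bdd: "dvar_bounded f u v" "dvar_bounded f v w"
    using dvar_bounded_subinterval[OF assms] by auto
  have "down_var f u w \<le> down_var f u v + down_var f v w"
  proof (rule down_var_le)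
    fix l assume "is_partition u w l"
    then obtain l1 l2 where "is_partition u v l1" "is_partition v w l2"
        "dvar f l \<le> dvar f l1 + dvar f l2"
      using partition_split[OF _ assms(2,3)] by blast
    then show "dvar f l \<le> down_var f u v + down_var f v w"
      using dvar_le_down_var[OF bdd(1)] dvar_le_down_var[OF bdd(2)] by fastforce
  qed (use assms in simp)
  moreover have "down_var f u v \<le> down_var f u w - down_var f v w"
  proof (rule down_var_le)
    fix l1 assume l1: "is_partition u v l1"
    have "down_var f v w \<le> down_var f u w - dvar f l1"
    proof (rule down_var_le)
      fix l2 assume "is_partition v w l2"
      from partition_append[OF l1 this, of f] show "dvar f l2 \<le> down_var f u w - dvar f l1"
        using dvar_le_down_var[OF assms(1), of "l1 @ tl l2"] by linarith
    qed (use assms in simp)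
    then show "dvar f l1 \<le> down_var f u w - down_var f v w" by linarith
  qed (use assms in simp)
  ultimately show ?thesis by linarith
qed

(* If f is nonincreasing on [q,p) and bounded below by B on [q,p], its downward variation
   on [q,p] is at most f q - B (only the final step into p can add a further decrease). *)
lemma dvar_noninc:
  assumes mono: "\<And>c c'. q \<le> c \<Longrightarrow> c \<le> c' \<Longrightarrow> c' < p \<Longrightarrow> f c' \<le> f c"
    and lower: "\<And>c. q \<le> c \<Longrightarrow> c \<le> p \<Longrightarrow> B \<le> f c"
  shows "sorted l \<Longrightarrow> set l \<subseteq> {q..p} \<Longrightarrow> l \<noteq> [] \<Longrightarrow> dvar f l \<le> f (hd l) - B"
proof (induction l)
  case Nil
  then show ?case by simp
next
  case (Cons y r)
  have fy: "B \<le> f y" using Cons.prems lower by auto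
  show ?case
  proof (cases r)
    case Nil
    then show ?thesis using fy by simp
  next
    case (Cons c r')
    have IH: "dvar f r \<le> f c - B" using Cons.IH Cons.prems Cons by auto
    have yc: "y \<le> c" "q \<le> y" "c \<le> p" using Cons.prems Cons by auto
    show ?thesis
    proof (cases "c < p")
      case True
      then have "f c \<le> f y" using mono yc by blast
      then show ?thesis using IH Cons by simp
    next
      case False
      then have "c = p" using yc by simp
      then have "\<forall>x\<in>set r. x = p" using Cons.prems Cons yc by fastforce
      then have "dvar f r = 0" by (rule dvar_const_points)
      then show ?thesis using Cons fy lower[of p] yc \<open>c = p\<close> by simp
    qed
  qed
qed

lemma dvar_nondec:
  assumes mono: "\<And>c c'. q \<le> c \<Longrightarrow> c \<le> c' \<Longrightarrow> c' < p \<Longrightarrow> f c \<le> f c'"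
    and upper: "\<And>c. q \<le> c \<Longrightarrow> c \<le> p \<Longrightarrow> f c \<le> B" and "q \<le> p"
  shows "sorted l \<Longrightarrow> set l \<subseteq> {q..p} \<Longrightarrow> dvar f l \<le> B - f p"
proof (induction l)
  case Nil
  then show ?case using upper[of p] \<open>q \<le> p\<close> by simp
next
  case (Cons y r)
  show ?case
  proof (cases r)
    case Nil
    then show ?thesis using upper[of p] \<open>q \<le> p\<close> by simp
  next
    case (Cons c r')
    have IH: "dvar f r \<le> B - f p" using Cons.IH Cons.prems Cons by auto
    have yc: "y \<le> c" "q \<le> y" "c \<le> p" using Cons.prems Cons by auto
    show ?thesis
    proof (cases "c < p")
      case True
      then have "f y \<le> f c" using mono yc by blast
      then show ?thesis using IH Cons by simp
    next
      case False
      then have "c = p" using yc by simp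
      then have "\<forall>x\<in>set r. x = p" using Cons.prems Cons yc by fastforce
      then have "dvar f r = 0" by (rule dvar_const_points)
      then show ?thesis using Cons upper[of y] upper[of p] yc \<open>c = p\<close> by simp
    qed
  qed
qed

lemma partition_set: "is_partition u v l \<Longrightarrow> set l \<subseteq> {u..v}"
  using partition_mem by fastforce

lemma down_var_noninc:
  assumes "q \<le> p" and "\<And>c c'. q \<le> c \<Longrightarrow> c \<le> c' \<Longrightarrow> c' < p \<Longrightarrow> f c' \<le> f c"
    and "\<And>c. q \<le> c \<Longrightarrow> c \<le> p \<Longrightarrow> B \<le> f c"
  shows "dvar_bounded f q p \<and> down_var f q p \<le> f q - B"
proof -
  have bound: "dvar f l \<le> f q - B" if "is_partition q p l" for l
    using dvar_noninc[where l=l, OF assms(2,3)] that partition_set[OF that]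
    unfolding is_partition_def by auto
  then show ?thesis using down_var_le[OF assms(1) bound] unfolding dvar_bounded_def by blast
qed

lemma down_var_nondec:
  assumes "q \<le> p" and "\<And>c c'. q \<le> c \<Longrightarrow> c \<le> c' \<Longrightarrow> c' < p \<Longrightarrow> f c \<le> f c'"
    and "\<And>c. q \<le> c \<Longrightarrow> c \<le> p \<Longrightarrow> f c \<le> B"
  shows "dvar_bounded f q p \<and> down_var f q p \<le> B - f p"
proof -
  have bound: "dvar f l \<le> B - f p" if "is_partition q p l" for l
    using dvar_nondec[where l=l, OF assms(2,3,1)] that partition_set[OF that]
    unfolding is_partition_def by auto
  then show ?thesis using down_var_le[OF assms(1) bound] unfolding dvar_bounded_def by blast
qed


lemma down_var_of_noninc:
  assumes "p \<le> t" "\<And>c c'. p \<le> c \<Longrightarrow> c \<le> c' \<Longrightarrow> c' \<le> t \<Longrightarrow> f c' \<le> f c"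
  shows "dvar_bounded f p t \<and> down_var f p t = f p - f t"
proof -
  have "dvar_bounded f p t \<and> down_var f p t \<le> f p - f t"
    by (rule down_var_noninc) (use assms in auto)
  moreover have "max (f p - f t) 0 \<le> down_var f p t" if "dvar_bounded f p t"
    using down_var_ge_drop[OF that assms(1)] .
  ultimately show ?thesis by fastforce
qed

lemma down_var_of_nondec:
  assumes "p \<le> t" "\<And>c c'. p \<le> c \<Longrightarrow> c \<le> c' \<Longrightarrow> c' \<le> t \<Longrightarrow> f c \<le> f c'"
  shows "dvar_bounded f p t \<and> down_var f p t = 0"
proof -
  have "dvar_bounded f p t \<and> down_var f p t \<le> f t - f t"
    by (rule down_var_nondec) (use assms in auto)
  then show ?thesis using down_var_nonneg[OF _ assms(1)] by fastforce
qed

lemma continuous_at_right_D: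
  fixes f :: "real \<Rightarrow> real"
  assumes "continuous (at_right p) f" "e > 0"
  shows "\<exists>b>p. \<forall>y. p < y \<and> y < b \<longrightarrow> \<bar>f y - f p\<bar> < e"
proof -
  have "(f \<longlongrightarrow> f p) (at_right p)" using assms(1) by (simp add: continuous_within)
  then have "eventually (\<lambda>y. dist (f y) (f p) < e) (at_right p)" using assms(2) by (rule tendstoD)
  then show ?thesis unfolding eventually_at_right_field dist_real_def by blast
qed

lemma continuous_at_right_I:
  fixes f :: "real \<Rightarrow> real"
  assumes "\<And>e. e > 0 \<Longrightarrow> \<exists>b>p. \<forall>y. p < y \<and> y < b \<longrightarrow> \<bar>f y - f p\<bar> < e"
  shows "continuous (at_right p) f"
proof -
  have "(f \<longlongrightarrow> f p) (at_right p)"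
  proof (rule tendstoI)
    fix e :: real assume "e > 0"
    then show "eventually (\<lambda>y. dist (f y) (f p) < e) (at_right p)"
      using assms unfolding eventually_at_right_field dist_real_def by blast
  qed
  then show ?thesis by (simp add: continuous_within)
qed

lemma tendsto_at_left_D:
  fixes f :: "real \<Rightarrow> real"
  assumes "(f \<longlongrightarrow> L) (at_left p)" "e > 0"
  shows "\<exists>b<p. \<forall>y. b < y \<and> y < p \<longrightarrow> \<bar>f y - L\<bar> < e"
proof -
  have "eventually (\<lambda>y. dist (f y) L < e) (at_left p)" using assms by (rule tendstoD)
  then show ?thesis unfolding eventually_at_left_field dist_real_def by blast
qed

lemma tendsto_at_left_I:
  fixes f :: "real \<Rightarrow> real"
  assumes "\<And>e. e > 0 \<Longrightarrow> \<exists>b<p. \<forall>y. b < y \<and> y < p \<longrightarrow> \<bar>f y - L\<bar> < e"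
  shows "(f \<longlongrightarrow> L) (at_left p)"
proof (rule tendstoI)
  fix e :: real assume "e > 0"
  then show "eventually (\<lambda>y. dist (f y) L < e) (at_left p)"
    using assms unfolding eventually_at_left_field dist_real_def by blast
qed

lemma left_limit_exists_Cauchy:
  fixes f :: "real \<Rightarrow> real"
  assumes "\<And>e. e > 0 \<Longrightarrow> \<exists>b<p. \<forall>y z. b < y \<and> y < p \<and> b < z \<and> z < p \<longrightarrow> \<bar>f y - f z\<bar> < e"
  shows "\<exists>L. (f \<longlongrightarrow> L) (at_left p)"
proof -
  define X where "X n = f (p - 1 / real (Suc n))" for n
  have eventually_near: "\<exists>N. \<forall>n\<ge>N. b < p - 1 / real (Suc n)" if bp: "b < p" for b
  proof -
    obtain N where N: "1 / real (Suc N) < p - b"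
      using reals_Archimedean[of "p - b"] bp by (auto simp: inverse_eq_divide)
    have "b < p - 1 / real (Suc n)" if "n \<ge> N" for n
      using N frac_le[of 1 1 "real (Suc N)" "real (Suc n)"] that by simp
    then show ?thesis by blast
  qed
  have "Cauchy X"
  proof (rule metric_CauchyI)
    fix e :: real assume "e > 0"
    then obtain b where b: "b < p" "\<forall>y z. b < y \<and> y < p \<and> b < z \<and> z < p \<longrightarrow> \<bar>f y - f z\<bar> < e"
      using assms by blast
    then obtain N where "\<forall>n\<ge>N. b < p - 1 / real (Suc n)" using eventually_near by blast
    then show "\<exists>M. \<forall>m\<ge>M. \<forall>n\<ge>M. dist (X m) (X n) < e"
      using b(2) unfolding X_def dist_real_def by (intro exI[of _ N]) simp
  qed
  then obtain L where L: "X \<longlonglongrightarrow> L" using Cauchy_convergent_iff convergent_def by blast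
  have "(f \<longlongrightarrow> L) (at_left p)"
  proof (rule tendsto_at_left_I)
    fix e :: real assume "e > 0"
    then obtain b where b: "b < p" "\<forall>y z. b < y \<and> y < p \<and> b < z \<and> z < p \<longrightarrow> \<bar>f y - f z\<bar> < e / 2"
      using assms[of "e / 2"] by auto
    obtain N where N: "\<forall>n\<ge>N. b < p - 1 / real (Suc n)" using eventually_near[OF b(1)] by blast
    obtain M where M: "\<forall>n\<ge>M. \<bar>X n - L\<bar> < e / 2"
      using LIMSEQ_D[OF L, of "e / 2"] \<open>e > 0\<close> by (auto simp: dist_real_def)
    define n where "n = max N M"
    have "N \<le> n" "M \<le> n" unfolding n_def by simp_all
    then have near: "b < p - 1 / real (Suc n)" and close: "\<bar>X n - L\<bar> < e / 2"
      using N M by blast+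
    have "\<bar>f y - L\<bar> < e" if "b < y" "y < p" for y
    proof -
      have "p - 1 / real (Suc n) < p" by simp
      then have "\<bar>f y - X n\<bar> < e / 2"
        using b(2)[rule_format, of y "p - 1 / real (Suc n)"] that near unfolding X_def by simp
      then show ?thesis using close by linarith
    qed
    then show "\<exists>b<p. \<forall>y. b < y \<and> y < p \<longrightarrow> \<bar>f y - L\<bar> < e" using b(1) by blast
  qed
  then show ?thesis by blast
qed

lemma left_limit_exists_mono:
  fixes F :: "real \<Rightarrow> real"
  assumes "0 < p" and mono: "\<And>x y. 0 \<le> x \<Longrightarrow> x \<le> y \<Longrightarrow> y < p \<Longrightarrow> F x \<le> F y"
    and bound: "\<And>x. 0 \<le> x \<Longrightarrow> x < p \<Longrightarrow> F x \<le> M"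
  shows "\<exists>L. (F \<longlongrightarrow> L) (at_left p)"
proof -
  define L where "L = (SUP x\<in>{0..<p}. F x)"
  have bdd: "bdd_above (F ` {0..<p})" unfolding bdd_above_def using bound by (intro exI[of _ M]) auto
  have ne: "{0..<p} \<noteq> {}" using assms(1) by simp
  have "(F \<longlongrightarrow> L) (at_left p)"
  proof (rule tendsto_at_left_I)
    fix e :: real assume "e > 0"
    then have "L - e < L" by simp
    then obtain x0 where x0: "x0 \<in> {0..<p}" "L - e < F x0"
      unfolding L_def using less_cSUP_iff[OF ne bdd] by blast
    have "\<bar>F y - L\<bar> < e" if "x0 < y" "y < p" for y
    proof -
      have "F y \<le> L" unfolding L_def using that x0 by (intro cSUP_upper[OF _ bdd]) auto
      moreover have "F x0 \<le> F y" using mono[of x0 y] that x0 by auto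
      ultimately show ?thesis using x0 by linarith
    qed
    then show "\<exists>b<p. \<forall>y. b < y \<and> y < p \<longrightarrow> \<bar>F y - L\<bar> < e" using x0 by auto
  qed
  then show ?thesis by blast
qed

lemma real_induction:
  fixes P :: "real \<Rightarrow> bool"
  assumes left: "\<And>p. 0 \<le> p \<Longrightarrow> (\<And>t. 0 \<le> t \<Longrightarrow> t < p \<Longrightarrow> P t) \<Longrightarrow> P p"
    and right: "\<And>p. 0 \<le> p \<Longrightarrow> P p \<Longrightarrow> \<exists>d>0. \<forall>t. p \<le> t \<and> t \<le> p + d \<longrightarrow> P t"
    and "0 \<le> t"
  shows "P t"
proof (rule ccontr)
  assume "\<not> P t"
  define S where "S = {t. 0 \<le> t \<and> \<not> P t}"
  have ne: "S \<noteq> {}" using \<open>\<not> P t\<close> \<open>0 \<le> t\<close> S_def by blast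
  have bdd: "bdd_below S" unfolding S_def bdd_below_def by auto
  define p where "p = Inf S"
  have p0: "0 \<le> p" unfolding p_def by (rule cInf_greatest[OF ne]) (auto simp: S_def)
  have "P u" if "0 \<le> u" "u < p" for u
  proof (rule ccontr)
    assume "\<not> P u"
    then have "p \<le> u" unfolding p_def using that by (intro cInf_lower[OF _ bdd]) (simp add: S_def)
    then show False using that by simp
  qed
  then have "P p" by (rule left[OF p0])
  then obtain d where d: "d > 0" "\<forall>u. p \<le> u \<and> u \<le> p + d \<longrightarrow> P u" using right[OF p0] by blast
  have "p + d \<le> p" unfolding p_def
  proof (rule cInf_greatest[OF ne])
    fix u assume u: "u \<in> S"
    have "p \<le> u" using cInf_lower[OF u bdd] unfolding p_def .
    show "Inf S + d \<le> u"
    proof (rule ccontr)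
      assume "\<not> Inf S + d \<le> u"
      then have "P u" using d(2) \<open>p \<le> u\<close> unfolding p_def by simp
      then show False using u unfolding S_def by simp
    qed
  qed
  then show False using d(1) by simp
qed

(* Cadlag functions are bounded on compact intervals [0,T], by real induction: boundedness
   on [0,t] for all t < p extends to [0,p] using the left limit at p, and boundedness on
   [0,p] extends a little to the right of p using right continuity. *)
lemma cadlag_bounded_extend_left:
  assumes f: "cadlag f" and p0: "0 < p"
    and IH: "\<And>t. 0 \<le> t \<Longrightarrow> t < p \<Longrightarrow> \<exists>K. \<forall>s. 0 \<le> s \<and> s \<le> t \<longrightarrow> \<bar>f s\<bar> \<le> K"
  shows "\<exists>K. \<forall>s. 0 \<le> s \<and> s \<le> p \<longrightarrow> \<bar>f s\<bar> \<le> K"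
proof -
  obtain L where "(f \<longlongrightarrow> L) (at_left p)" using f p0 unfolding cadlag_def by blast
  then obtain b where b: "b < p" "\<forall>y. b < y \<and> y < p \<longrightarrow> \<bar>f y - L\<bar> < 1"
    using tendsto_at_left_D[of f L p 1] by auto
  define c where "c = max 0 ((b + p) / 2)"
  have c: "0 \<le> c" "c < p" using b(1) p0 unfolding c_def by auto
  have "b < c" using b(1) unfolding c_def by (simp add: less_max_iff_disj field_simps)
  obtain K where K: "\<forall>s. 0 \<le> s \<and> s \<le> c \<longrightarrow> \<bar>f s\<bar> \<le> K" using IH[OF c] by blast
  have "\<bar>f s\<bar> \<le> max K (max (\<bar>L\<bar> + 1) \<bar>f p\<bar>)" if s: "0 \<le> s" "s \<le> p" for s
  proof -
    consider "s \<le> c" | "c < s" "s < p" | "s = p" using s by linarith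
    then show ?thesis
    proof cases
      case 1
      then show ?thesis using K s by (meson max.coboundedI1)
    next
      case 2
      then have "\<bar>f s - L\<bar> < 1" using b(2) \<open>b < c\<close> by simp
      then show ?thesis by linarith
    next
      case 3
      then show ?thesis by simp
    qed
  qed
  then show ?thesis by blast
qed

lemma cadlag_bounded_extend_right:
  assumes f: "cadlag f" and p0: "0 \<le> p" and bound: "\<exists>K. \<forall>s. 0 \<le> s \<and> s \<le> p \<longrightarrow> \<bar>f s\<bar> \<le> K"
  shows "\<exists>d>0. \<forall>t. p \<le> t \<and> t \<le> p + d \<longrightarrow> (\<exists>K. \<forall>s. 0 \<le> s \<and> s \<le> t \<longrightarrow> \<bar>f s\<bar> \<le> K)"
proof -
  obtain K where K: "\<forall>s. 0 \<le> s \<and> s \<le> p \<longrightarrow> \<bar>f s\<bar> \<le> K" using bound by blast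
  have "continuous (at_right p) f" using f p0 unfolding cadlag_def by simp
  then obtain b where b: "b > p" "\<forall>y. p < y \<and> y < b \<longrightarrow> \<bar>f y - f p\<bar> < 1"
    using continuous_at_right_D[of p f 1] by auto
  have "\<bar>f s\<bar> \<le> max K (\<bar>f p\<bar> + 1)" if "0 \<le> s" "s \<le> p + (b - p) / 2" for s
  proof (cases "s \<le> p")
    case True
    then show ?thesis using K that by (meson max.coboundedI1)
  next
    case False
    then have "\<bar>f s - f p\<bar> < 1" using b that by (simp add: field_simps)
    then show ?thesis by linarith
  qed
  then show ?thesis using b(1) by (intro exI[of _ "(b - p) / 2"]) force
qed

lemma cadlag_bounded:
  assumes "cadlag f" "0 \<le> T"
  shows "\<exists>K. \<forall>t. 0 \<le> t \<and> t \<le> T \<longrightarrow> \<bar>f t\<bar> \<le> K"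
proof (rule real_induction[where P = "\<lambda>T. \<exists>K. \<forall>t. 0 \<le> t \<and> t \<le> T \<longrightarrow> \<bar>f t\<bar> \<le> K"])
  fix p :: real
  assume "0 \<le> p" "\<And>t. 0 \<le> t \<Longrightarrow> t < p \<Longrightarrow> \<exists>K. \<forall>s. 0 \<le> s \<and> s \<le> t \<longrightarrow> \<bar>f s\<bar> \<le> K"
  then show "\<exists>K. \<forall>t. 0 \<le> t \<and> t \<le> p \<longrightarrow> \<bar>f t\<bar> \<le> K"
    using cadlag_bounded_extend_left[OF assms(1)] by (cases "p = 0") (auto intro: exI[of _ "\<bar>f 0\<bar>"])
qed (use cadlag_bounded_extend_right[OF assms(1)] assms(2) in auto)

lemma cadlag_add:
  assumes "cadlag f" "cadlag g"
  shows "cadlag (\<lambda>t. f t + g t)"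
  unfolding cadlag_def
proof (intro conjI allI impI)
  fix t :: real
  show "continuous (at_right t) (\<lambda>t. f t + g t)" if "0 \<le> t"
    using assms that unfolding cadlag_def by (simp add: continuous_add)
  show "\<exists>l. ((\<lambda>t. f t + g t) \<longlongrightarrow> l) (at_left t)" if t: "0 < t"
  proof -
    obtain l1 l2 where "(f \<longlongrightarrow> l1) (at_left t)" "(g \<longlongrightarrow> l2) (at_left t)"
      using assms t unfolding cadlag_def by blast
    then show ?thesis by (intro exI[of _ "l1 + l2"] tendsto_add)
  qed
qed

lemma cadlag_diff:
  assumes "cadlag f" "cadlag g"
  shows "cadlag (\<lambda>t. f t - g t)"
  unfolding cadlag_def
proof (intro conjI allI impI)
  fix t :: real
  show "continuous (at_right t) (\<lambda>t. f t - g t)" if "0 \<le> t"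
    using assms that unfolding cadlag_def by (simp add: continuous_diff)
  show "\<exists>l. ((\<lambda>t. f t - g t) \<longlongrightarrow> l) (at_left t)" if t: "0 < t"
  proof -
    obtain l1 l2 where "(f \<longlongrightarrow> l1) (at_left t)" "(g \<longlongrightarrow> l2) (at_left t)"
      using assms t unfolding cadlag_def by blast
    then show ?thesis by (intro exI[of _ "l1 - l2"] tendsto_diff)
  qed
qed

lemma left_limit_le_noninc:
  fixes f :: "real \<Rightarrow> real"
  assumes L: "(f \<longlongrightarrow> L) (at_left p)"
    and mono: "\<forall>c c'. q \<le> c \<longrightarrow> c \<le> c' \<longrightarrow> c' < p \<longrightarrow> f c' \<le> f c" and c: "q \<le> c" "c < p"
  shows "L \<le> f c"
proof (rule tendsto_upperbound[OF L])
  have "\<forall>y. c < y \<and> y < p \<longrightarrow> f y \<le> f c" using mono c(1) by (meson less_imp_le)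
  then show "eventually (\<lambda>y. f y \<le> f c) (at_left p)"
    unfolding eventually_at_left_field using c(2) by blast
qed simp

lemma left_limit_ge_nondec:
  fixes f :: "real \<Rightarrow> real"
  assumes L: "(f \<longlongrightarrow> L) (at_left p)"
    and mono: "\<forall>c c'. q \<le> c \<longrightarrow> c \<le> c' \<longrightarrow> c' < p \<longrightarrow> f c \<le> f c'" and c: "q \<le> c" "c < p"
  shows "f c \<le> L"
proof (rule tendsto_lowerbound[OF L])
  have "\<forall>y. c < y \<and> y < p \<longrightarrow> f c \<le> f y" using mono c(1) by (meson less_imp_le)
  then show "eventually (\<lambda>y. f c \<le> f y) (at_left p)"
    unfolding eventually_at_left_field using c(2) by blast
qed simp

lemma left_limit_approx:
  fixes f :: "real \<Rightarrow> real"
  assumes "(f \<longlongrightarrow> L) (at_left p)" "q0 < p" "0 < e"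
  shows "\<exists>q. q0 \<le> q \<and> q < p \<and> \<bar>f q - L\<bar> < e"
proof -
  obtain b where b: "b < p" "\<forall>y. b < y \<and> y < p \<longrightarrow> \<bar>f y - L\<bar> < e"
    using tendsto_at_left_D[OF assms(1,3)] by blast
  obtain q where "max b q0 < q" "q < p" using dense[of "max b q0" p] b(1) assms(2) by auto
  then show ?thesis using b(2) by (intro exI[of _ q]) auto
qed

lemma nondecr_mono: "nondecr G \<Longrightarrow> 0 \<le> v \<Longrightarrow> v \<le> w \<Longrightarrow> G v \<le> G w"
  unfolding nondecr_def by (auto intro: mono_onD)

lemma ext0_mono:
  assumes "nondecr G" "0 \<le> G 0" "u \<le> v"
  shows "ext0 G u \<le> ext0 G v"
proof -
  have mono: "mono_on {0..} G" using assms(1) unfolding nondecr_def by simp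
  show ?thesis
  proof (cases "u < 0")
    case True
    then show ?thesis
    proof (cases "v < 0")
      case False
      then have "G 0 \<le> G v" using mono by (auto intro: mono_onD)
      then show ?thesis using True False assms(2) by (simp add: ext0_def)
    qed (simp add: ext0_def)
  next
    case False
    then show ?thesis using assms(3) mono by (auto simp: ext0_def intro: mono_onD)
  qed
qed

lemma ext0_continuous_at_right:
  assumes "nondecr G"
  shows "continuous (at_right u) (ext0 G)"
proof (rule continuous_at_right_I)
  fix e :: real assume e: "e > 0"
  show "\<exists>b>u. \<forall>y. u < y \<and> y < b \<longrightarrow> \<bar>ext0 G y - ext0 G u\<bar> < e"
  proof (cases "u < 0")
    case True
    then show ?thesis using e by (intro exI[of _ 0]) (auto simp: ext0_def)
  next
    case False
    then have "continuous (at_right u) G" using assms unfolding nondecr_def cadlag_def by simp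
    from continuous_at_right_D[OF this e] obtain b
      where "b > u" "\<forall>y. u < y \<and> y < b \<longrightarrow> \<bar>G y - G u\<bar> < e" by blast
    then show ?thesis using False by (intro exI[of _ b]) (auto simp: ext0_def)
  qed
qed

lemma LS_measure_Ioc:
  assumes "nondecr G" "0 \<le> G 0" "u \<le> v"
  shows "emeasure (interval_measure (ext0 G)) {u<..v} = ennreal (ext0 G v - ext0 G u)"
  by (rule emeasure_interval_measure_Ioc[OF assms(3)])
    (auto intro: ext0_mono[OF assms(1,2)] ext0_continuous_at_right[OF assms(1)])

lemma LS_measure_flat_interval:
  assumes G: "nondecr G" "0 \<le> G 0" and "0 \<le> p" "0 < d"
    and flat: "\<And>r. p \<le> r \<Longrightarrow> r \<le> p + d \<Longrightarrow> G r = G p"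
    and no_jump: "\<And>e. e > 0 \<Longrightarrow> \<exists>q<p. ext0 G p - ext0 G q < e"
  shows "emeasure (interval_measure (ext0 G)) {p..<p+d} = 0"
proof -
  have "emeasure (interval_measure (ext0 G)) {p..<p+d} \<le> 0"
  proof (rule ennreal_le_epsilon)
    fix e :: real assume "e > 0"
    then obtain q where q: "q < p" "ext0 G p - ext0 G q < e" using no_jump by blast
    have "emeasure (interval_measure (ext0 G)) {p..<p+d}
        \<le> emeasure (interval_measure (ext0 G)) {q<..p+d}"
      using q(1) by (intro emeasure_mono) auto
    also have "\<dots> = ennreal (ext0 G (p + d) - ext0 G q)"
      using q(1) assms(4) by (intro LS_measure_Ioc[OF G]) simp
    also have "ext0 G (p + d) = ext0 G p"
      using flat[of "p + d"] assms(3,4) by (simp add: ext0_def)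
    also have "ennreal (ext0 G p - ext0 G q) \<le> ennreal e"
      using q(2) by (intro ennreal_leI) simp
    finally show "emeasure (interval_measure (ext0 G)) {p..<p+d} \<le> 0 + ennreal e" by simp
  qed
  then show ?thesis by simp
qed

(* A set of reals in which every point p is followed by a gap of length d p > 0 is
   countable: the open intervals (p, p + d p) are disjoint. *)
lemma countable_right_separated:
  fixes E :: "real set"
  assumes pos: "\<And>p. p \<in> E \<Longrightarrow> 0 < d p"
    and gap: "\<And>p q. p \<in> E \<Longrightarrow> q \<in> E \<Longrightarrow> p < q \<Longrightarrow> p + d p \<le> q"
  shows "countable E"
proof -
  define J where "J p = {p<..<p + d p}" for p
  have disj: "J p \<inter> J q = {}" if "p \<in> E" "q \<in> E" "p \<noteq> q" for p q
    using gap[OF that(1,2)] gap[OF that(2,1)] that(3) unfolding J_def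
    by (cases "p < q") (auto simp: disjoint_iff)
  have nonempty: "J p \<noteq> {}" if "p \<in> E" for p
    using pos[OF that] unfolding J_def by simp
  have "inj_on J E"
    by (rule inj_onI) (use disj nonempty in fastforce)
  moreover have "pairwise disjnt (J ` E)"
    by (rule pairwiseI) (use disj in \<open>auto simp: disjnt_def\<close>)
  then have "countable (J ` E)"
    by (rule countable_disjoint_open_subsets[rotated]) (auto simp: J_def)
  ultimately show ?thesis by (rule countable_image_inj_on[rotated])
qed

(* Countably many right-closed intervals [p, p + d p) cover any set A of reals: by
   Lindelof's theorem countably many of the open intervals (p, p + d p) cover their union,
   and the points of A outside that union are countable by the previous lemma. *)
lemma countable_right_interval_cover:
  fixes A :: "real set"
  assumes pos: "\<And>p. p \<in> A \<Longrightarrow> 0 < d p"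
  shows "\<exists>C. countable C \<and> C \<subseteq> A \<and> A \<subseteq> (\<Union>p\<in>C. {p..<p + d p})"
proof -
  define J where "J p = {p<..<p + d p}" for p
  have "\<And>S. S \<in> J ` A \<Longrightarrow> open S" unfolding J_def by auto
  then obtain F where F: "F \<subseteq> J ` A" "countable F" "\<Union>F = \<Union>(J ` A)"
    using Lindelof by blast
  obtain C where C: "countable C" "C \<subseteq> A" "F = J ` C"
    using countable_subset_image[of F J A] F(1,2) by blast
  define E where "E = A - \<Union>(J ` A)"
  have "countable E"
  proof (rule countable_right_separated)
    show "0 < d p" if "p \<in> E" for p using pos that unfolding E_def by blast
    show "p + d p \<le> q" if pq: "p \<in> E" "q \<in> E" "p < q" for p q
    proof (rule ccontr)
      assume "\<not> p + d p \<le> q"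
      then have "q \<in> J p" using pq(3) unfolding J_def by simp
      moreover have "p \<in> A" using pq(1) unfolding E_def by simp
      ultimately show False using pq(2) unfolding E_def by blast
    qed
  qed
  have "A \<subseteq> (\<Union>p\<in>C \<union> E. {p..<p + d p})"
  proof
    fix z assume z: "z \<in> A"
    show "z \<in> (\<Union>p\<in>C \<union> E. {p..<p + d p})"
    proof (cases "z \<in> \<Union>(J ` A)")
      case True
      then obtain p where "p \<in> C" "z \<in> J p" using F(3) C(3) by auto
      then show ?thesis unfolding J_def by auto
    next
      case False
      then have "z \<in> E" using z unfolding E_def by simp
      then show ?thesis using pos[OF z] by auto
    qed
  qed
  moreover have "C \<union> E \<subseteq> A" using C(2) unfolding E_def by blast
  ultimately show ?thesis using C(1) \<open>countable E\<close> by (intro exI[of _ "C \<union> E"]) simp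
qed

lemma null_by_right_intervals:
  fixes M :: "real measure"
  assumes sets_M: "sets M = sets borel"
    and local_null: "\<And>p. p \<in> A \<Longrightarrow> \<exists>d>0. {p..<p+d} \<subseteq> A \<and> emeasure M {p..<p+d} = 0"
  shows "A \<in> sets borel \<and> emeasure M A = 0"
proof -
  obtain d where d: "\<And>p. p \<in> A \<Longrightarrow> d p > 0 \<and> {p..<p + d p} \<subseteq> A \<and> emeasure M {p..<p + d p} = 0"
    using local_null by metis
  then obtain C where C: "countable C" "C \<subseteq> A" "A \<subseteq> (\<Union>p\<in>C. {p..<p + d p})"
    using countable_right_interval_cover[of A d] by blast
  then have cover: "A = (\<Union>p\<in>C. {p..<p + d p})" using d by blast
  have "(\<Union>p\<in>C. {p..<p + d p}) \<in> null_sets M"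
  proof (rule null_sets_UN')
    show "{p..<p + d p} \<in> null_sets M" if "p \<in> C" for p
      using d[of p] C(2) that sets_M by (auto simp: null_sets_def)
  qed (rule C(1))
  then show ?thesis using cover sets_M by (simp add: null_sets_def)
qed

lemma bv_of_nondecr_diff:
  assumes "cadlag \<eta>" "nondecr \<eta>l" "nondecr \<eta>u" "\<And>t. 0 \<le> t \<Longrightarrow> \<eta> t = \<eta>l t - \<eta>u t"
  shows "bv \<eta>"
  unfolding bv_def
proof (intro conjI allI impI)
  show "cadlag \<eta>" by (rule assms(1))
  fix T :: real assume "0 \<le> T"
  have ml: "mono_on {0..} \<eta>l" and mu: "mono_on {0..} \<eta>u"
    using assms(2,3) unfolding nondecr_def by auto
  show "\<exists>B. \<forall>n s. s 0 = 0 \<and> s n = T \<and> (\<forall>i<n. s i \<le> s (Suc i)) \<longrightarrow>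
          (\<Sum>i<n. \<bar>\<eta> (s (Suc i)) - \<eta> (s i)\<bar>) \<le> B"
  proof (intro exI allI impI)
    fix n and s :: "nat \<Rightarrow> real"
    assume s: "s 0 = 0 \<and> s n = T \<and> (\<forall>i<n. s i \<le> s (Suc i))"
    have s_nonneg: "0 \<le> s i" if "i \<le> n" for i
      using that
    proof (induction i)
      case (Suc i)
      then show ?case using s by (metis Suc_le_lessD less_imp_le_nat order_trans)
    qed (use s in simp)
    have "\<bar>\<eta> (s (Suc i)) - \<eta> (s i)\<bar>
        \<le> (\<eta>l (s (Suc i)) - \<eta>l (s i)) + (\<eta>u (s (Suc i)) - \<eta>u (s i))" if "i < n" for i
    proof -
      have le: "0 \<le> s i" "0 \<le> s (Suc i)" "s i \<le> s (Suc i)"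
        using s_nonneg[of i] s_nonneg[of "Suc i"] s that by auto
      have "\<eta>l (s i) \<le> \<eta>l (s (Suc i))" "\<eta>u (s i) \<le> \<eta>u (s (Suc i))"
        using le ml mu by (auto intro: mono_onD)
      then show ?thesis using assms(4)[OF le(1)] assms(4)[OF le(2)] by linarith
    qed
    then have "(\<Sum>i<n. \<bar>\<eta> (s (Suc i)) - \<eta> (s i)\<bar>)
        \<le> (\<Sum>i<n. (\<eta>l (s (Suc i)) - \<eta>l (s i)) + (\<eta>u (s (Suc i)) - \<eta>u (s i)))"
      by (intro sum_mono) auto
    also have "\<dots> = (\<eta>l (s n) - \<eta>l (s 0)) + (\<eta>u (s n) - \<eta>u (s 0))"
      using sum_lessThan_telescope[of "\<lambda>i. \<eta>l (s i)" n] sum_lessThan_telescope[of "\<lambda>i. \<eta>u (s i)" n]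
      by (simp add: sum.distrib)
    finally show "(\<Sum>i<n. \<bar>\<eta> (s (Suc i)) - \<eta> (s i)\<bar>) \<le> (\<eta>l T - \<eta>l 0) + (\<eta>u T - \<eta>u 0)"
      using s by simp
  qed
qed

lemma LS_null_of_locally_flat:
  assumes G: "nondecr G" "0 \<le> G 0"
    and flat: "\<And>p. 0 \<le> p \<Longrightarrow> Q p \<Longrightarrow> \<exists>d>0. \<forall>r. p \<le> r \<longrightarrow> r \<le> p + d \<longrightarrow> G r = G p \<and> Q r"
    and no_jump: "\<And>p e. 0 \<le> p \<Longrightarrow> Q p \<Longrightarrow> 0 < e \<Longrightarrow> \<exists>q<p. ext0 G p - ext0 G q < e"
  shows "LS_null G {s. 0 \<le> s \<and> Q s}"
proof -
  let ?P = "{s. 0 \<le> s \<and> Q s}"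
  have "?P \<in> sets borel \<and> emeasure (interval_measure (ext0 G)) ?P = 0"
  proof (rule null_by_right_intervals)
    show "sets (interval_measure (ext0 G)) = sets borel" by simp
    fix p assume "p \<in> ?P"
    then have p: "0 \<le> p" "Q p" by auto
    obtain d where d: "d > 0" "\<forall>r. p \<le> r \<longrightarrow> r \<le> p + d \<longrightarrow> G r = G p \<and> Q r"
      using flat[OF p] by blast
    have "emeasure (interval_measure (ext0 G)) {p..<p+d} = 0"
    proof (rule LS_measure_flat_interval[OF G p(1) d(1)])
      show "\<And>r. p \<le> r \<Longrightarrow> r \<le> p + d \<Longrightarrow> G r = G p" using d(2) by blast
      show "\<And>e. e > 0 \<Longrightarrow> \<exists>q<p. ext0 G p - ext0 G q < e" by (rule no_jump[OF p])
    qed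
    moreover have "{p..<p+d} \<subseteq> ?P" using d(2) p(1) by auto
    ultimately show "\<exists>d>0. {p..<p+d} \<subseteq> ?P \<and> emeasure (interval_measure (ext0 G)) {p..<p+d} = 0"
      using d(1) by blast
  qed
  then show ?thesis unfolding LS_null_def by simp
qed

lemma LS_null_flat:
  assumes G: "nondecr G" "0 \<le> G 0" and N: "LS_null G A"
    and "0 \<le> u" "u \<le> t" "{u<..t} \<subseteq> A"
  shows "G t = G u"
proof -
  have "emeasure (interval_measure (ext0 G)) {u<..t} \<le> emeasure (interval_measure (ext0 G)) A"
    using N assms(6) unfolding LS_null_def by (intro emeasure_mono) auto
  also have "\<dots> = 0" using N unfolding LS_null_def by simp
  finally have "ennreal (ext0 G t - ext0 G u) \<le> 0" using LS_measure_Ioc[OF G assms(5)] by simp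
  then have "G t - G u \<le> 0" using assms(4,5) by (simp add: ext0_def ennreal_eq_0_iff)
  moreover have "G u \<le> G t" using G(1) assms(4,5) unfolding nondecr_def by (auto intro: mono_onD)
  ultimately show ?thesis by simp
qed

(* Continuity from above: the mass of (q, s) tends to 0 as q tends to s from the left. *)
lemma LS_measure_left_interval_small:
  assumes G: "nondecr G" "0 \<le> G 0" and e: "0 < e"
  shows "\<exists>q<s. emeasure (interval_measure (ext0 G)) {q<..<s} < ennreal e"
proof -
  let ?M = "interval_measure (ext0 G)"
  define I where "I n = {s - 1 / real (Suc n) <..< s}" for n
  have dec: "decseq I"
  proof (rule decseq_SucI)
    fix n
    have "1 / real (Suc (Suc n)) \<le> 1 / real (Suc n)" by (simp add: frac_le)
    then show "I (Suc n) \<subseteq> I n" unfolding I_def by auto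
  qed
  have fin: "emeasure ?M (I n) \<noteq> \<infinity>" for n
  proof -
    have "emeasure ?M (I n) \<le> emeasure ?M {s - 1 / real (Suc n) <.. s}"
      unfolding I_def by (intro emeasure_mono) auto
    also have "\<dots> = ennreal (ext0 G s - ext0 G (s - 1 / real (Suc n)))"
      by (intro LS_measure_Ioc[OF G]) simp
    finally show ?thesis by (auto simp: top_unique)
  qed
  have "(\<lambda>n. emeasure ?M (I n)) \<longlonglongrightarrow> emeasure ?M (\<Inter>n. I n)"
  proof (rule Lim_emeasure_decseq)
    show "range I \<subseteq> sets ?M" by (auto simp: I_def)
  qed (use dec fin in auto)
  moreover have "(\<Inter>n. I n) = {}"
  proof (rule ccontr)
    assume "(\<Inter>n. I n) \<noteq> {}"
    then obtain z where z: "\<And>n. z \<in> I n" by blast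
    then have "z < s" unfolding I_def by auto
    then obtain n where "1 / real (Suc n) < s - z"
      using reals_Archimedean[of "s - z"] by (auto simp: inverse_eq_divide)
    moreover have "s - 1 / real (Suc n) < z" using z[of n] unfolding I_def by auto
    ultimately show False by linarith
  qed
  ultimately have "(\<lambda>n. emeasure ?M (I n)) \<longlonglongrightarrow> 0" by simp
  moreover have "(0::ennreal) < ennreal e" using e by simp
  ultimately have "eventually (\<lambda>n. emeasure ?M (I n) < ennreal e) sequentially"
    by (rule order_tendstoD(2))
  then obtain n where "emeasure ?M (I n) < ennreal e" by (meson eventually_sequentially order_refl)
  moreover have "s - 1 / real (Suc n) < s" by simp
  ultimately show ?thesis unfolding I_def by blast
qed

lemma LS_null_small_increment:
  assumes G: "nondecr G" "0 \<le> G 0" and N: "LS_null G A"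
    and st: "s \<le> t" "{s..t} \<subseteq> A" and e: "0 < e"
  shows "\<exists>q<s. \<forall>u. q \<le> u \<longrightarrow> u < s \<longrightarrow> ext0 G t - ext0 G u < e"
proof -
  let ?M = "interval_measure (ext0 G)"
  obtain q where q: "q < s" "emeasure ?M {q<..<s} < ennreal e"
    using LS_measure_left_interval_small[OF G e] by blast
  have "ext0 G t - ext0 G u < e" if u: "q \<le> u" "u < s" for u
  proof -
    have A: "A \<in> sets borel" "emeasure ?M A = 0" using N unfolding LS_null_def by auto
    have "ennreal (ext0 G t - ext0 G u) = emeasure ?M {u<..t}"
      using u st by (intro LS_measure_Ioc[OF G, symmetric]) simp
    also have "\<dots> \<le> emeasure ?M ({u<..<s} \<union> A)"
    proof (rule emeasure_mono)
      show "{u<..t} \<subseteq> {u<..<s} \<union> A"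
      proof
        fix z assume z: "z \<in> {u<..t}"
        show "z \<in> {u<..<s} \<union> A"
        proof (cases "z < s")
          case False
          then have "z \<in> {s..t}" using z by auto
          then show ?thesis using st(2) by blast
        qed (use z in auto)
      qed
      show "{u<..<s} \<union> A \<in> sets ?M" using A(1) by auto
    qed
    also have "\<dots> \<le> emeasure ?M {u<..<s} + emeasure ?M A"
      using A(1) by (intro emeasure_subadditive) auto
    also have "emeasure ?M A = 0" by (rule A(2))
    also have "emeasure ?M {u<..<s} \<le> emeasure ?M {q<..<s}"
      using u by (intro emeasure_mono) auto
    finally have "ennreal (ext0 G t - ext0 G u) < ennreal e" using q(2) by simp
    moreover have "0 \<le> ext0 G t - ext0 G u" using ext0_mono[OF G, of u t] u st by simp
    ultimately show ?thesis by (simp add: ennreal_less_iff)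
  qed
  then show ?thesis using q(1) by blast
qed

locale sp_criterion =
  fixes a :: real and x \<eta> :: "real \<Rightarrow> real"
  assumes a_pos: "0 < a"
    and cadlag_x: "cadlag x" and cadlag_eta: "cadlag \<eta>"
    and x_bounds: "\<And>t. 0 \<le> t \<Longrightarrow> 0 \<le> x t \<and> x t \<le> a"
    and noninc_off_zero: "\<And>e s t. 0 < e \<Longrightarrow> 0 \<le> s \<Longrightarrow> s \<le> t \<Longrightarrow>
          (\<And>r. s < r \<Longrightarrow> r \<le> t \<Longrightarrow> e \<le> x r) \<Longrightarrow> \<eta> t \<le> \<eta> s"
    and nondec_off_top: "\<And>e s t. 0 < e \<Longrightarrow> 0 \<le> s \<Longrightarrow> s \<le> t \<Longrightarrow>
          (\<And>r. s < r \<Longrightarrow> r \<le> t \<Longrightarrow> x r \<le> a - e) \<Longrightarrow> \<eta> s \<le> \<eta> t"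
    and jump_off_zero: "\<And>t L. 0 < t \<Longrightarrow> 0 < x t \<Longrightarrow> (\<eta> \<longlongrightarrow> L) (at_left t) \<Longrightarrow> \<eta> t \<le> L"
    and jump_off_top: "\<And>t L. 0 < t \<Longrightarrow> x t < a \<Longrightarrow> (\<eta> \<longlongrightarrow> L) (at_left t) \<Longrightarrow> L \<le> \<eta> t"
    and start_off_zero: "0 < x 0 \<Longrightarrow> \<eta> 0 \<le> 0"
    and start_off_top: "x 0 < a \<Longrightarrow> 0 \<le> \<eta> 0"
begin

lemma noninc_right_of:
  assumes "0 \<le> p" "0 < x p"
  shows "\<exists>d>0. (\<forall>c c'. p \<le> c \<longrightarrow> c \<le> c' \<longrightarrow> c' \<le> p + d \<longrightarrow> \<eta> c' \<le> \<eta> c)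
               \<and> (\<forall>r. p \<le> r \<longrightarrow> r \<le> p + d \<longrightarrow> 0 < x r)"
proof -
  define e where "e = x p / 2"
  have e: "0 < e" "x p = 2 * e" using assms(2) by (simp_all add: e_def)
  have "continuous (at_right p) x" using cadlag_x assms(1) unfolding cadlag_def by simp
  then obtain b where b: "b > p" "\<forall>y. p < y \<and> y < b \<longrightarrow> \<bar>x y - x p\<bar> < e"
    using continuous_at_right_D e(1) by blast
  obtain d where d: "0 < d" "p + d < b" using dense[of 0 "b - p"] b(1) by (auto simp: algebra_simps)
  have x_large: "e \<le> x r" if "p \<le> r" "r \<le> p + d" for r
    using b(2)[rule_format, of r] that d e by (cases "r = p") auto
  have "\<eta> c' \<le> \<eta> c" if "p \<le> c" "c \<le> c'" "c' \<le> p + d" for c c'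
    by (rule noninc_off_zero[OF e(1)]) (use that x_large assms(1) in auto)
  then show ?thesis using d(1) x_large e(1) by (intro exI[of _ d]) force
qed

lemma nondec_right_of:
  assumes "0 \<le> p" "x p < a"
  shows "\<exists>d>0. (\<forall>c c'. p \<le> c \<longrightarrow> c \<le> c' \<longrightarrow> c' \<le> p + d \<longrightarrow> \<eta> c \<le> \<eta> c')
               \<and> (\<forall>r. p \<le> r \<longrightarrow> r \<le> p + d \<longrightarrow> x r < a)"
proof -
  define e where "e = (a - x p) / 2"
  have e: "0 < e" "a - x p = 2 * e" using assms(2) by (simp_all add: e_def)
  have "continuous (at_right p) x" using cadlag_x assms(1) unfolding cadlag_def by simp
  then obtain b where b: "b > p" "\<forall>y. p < y \<and> y < b \<longrightarrow> \<bar>x y - x p\<bar> < e"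
    using continuous_at_right_D e(1) by blast
  obtain d where d: "0 < d" "p + d < b" using dense[of 0 "b - p"] b(1) by (auto simp: algebra_simps)
  have x_small: "x r \<le> a - e" if "p \<le> r" "r \<le> p + d" for r
    using b(2)[rule_format, of r] that d e by (cases "r = p") auto
  have "\<eta> c \<le> \<eta> c'" if "p \<le> c" "c \<le> c'" "c' \<le> p + d" for c c'
    by (rule nondec_off_top[OF e(1)]) (use that x_small assms(1) in auto)
  moreover have "x r < a" if "p \<le> r" "r \<le> p + d" for r
    using x_small[OF that] e(1) by linarith
  ultimately show ?thesis using d(1) by (intro exI[of _ d]) blast
qed

(* Just before any time p > 0, eta is monotone: the left limit of x at p is either
   positive or below a, and x stays away from 0, resp. from a, on some [q,p). *)
lemma monotone_left_of:
  assumes "0 < p"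
  obtains q where "0 \<le> q" "q < p" "\<forall>c c'. q \<le> c \<longrightarrow> c \<le> c' \<longrightarrow> c' < p \<longrightarrow> \<eta> c' \<le> \<eta> c"
    | q where "0 \<le> q" "q < p" "\<forall>c c'. q \<le> c \<longrightarrow> c \<le> c' \<longrightarrow> c' < p \<longrightarrow> \<eta> c \<le> \<eta> c'"
proof -
  obtain Lx where Lx: "(x \<longlongrightarrow> Lx) (at_left p)" using cadlag_x assms unfolding cadlag_def by blast
  define e where "e = max Lx (a - Lx) / 2"
  have e: "0 < e" using a_pos unfolding e_def by (cases "0 < Lx") auto
  obtain b where b: "b < p" "\<forall>y. b < y \<and> y < p \<longrightarrow> \<bar>x y - Lx\<bar> < e"
    using tendsto_at_left_D[OF Lx e] by blast
  define q where "q = max 0 ((b + p) / 2)"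
  have q: "0 \<le> q" "q < p" "b < q" using b(1) assms unfolding q_def
    by (auto simp: less_max_iff_disj field_simps)
  have x_near: "\<bar>x r - Lx\<bar> < e" if "q \<le> r" "r < p" for r using b(2) q that by simp
  show thesis
  proof (cases "a - Lx \<le> Lx")
    case True
    then have "e = Lx / 2" unfolding e_def by (simp add: max_def)
    then have x_large: "e \<le> x r" if "q \<le> r" "r < p" for r
      using x_near[OF that] by (simp add: abs_less_iff)
    have "\<eta> c' \<le> \<eta> c" if c: "q \<le> c" "c \<le> c'" "c' < p" for c c'
      by (rule noninc_off_zero[OF e]) (use c q x_large in auto)
    then show thesis using that(1) q by blast
  next
    case False
    then have "e = (a - Lx) / 2" unfolding e_def by (simp add: max_def)
    then have x_small: "x r \<le> a - e" if "q \<le> r" "r < p" for r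
      using x_near[OF that] by (simp add: abs_less_iff)
    have "\<eta> c \<le> \<eta> c'" if c: "q \<le> c" "c \<le> c'" "c' < p" for c c'
      by (rule nondec_off_top[OF e]) (use c q x_small in auto)
    then show thesis using that(2) q by blast
  qed
qed

(* The downward variation of eta on [0,t] is finite: by real induction, using the local
   monotonicity of eta on both sides of every time. *)
lemma dvar_bounded_left_of:
  assumes "0 < p"
  shows "\<exists>q. 0 \<le> q \<and> q < p \<and> dvar_bounded \<eta> q p"
proof -
  obtain L where L: "(\<eta> \<longlongrightarrow> L) (at_left p)" using cadlag_eta assms unfolding cadlag_def by blast
  from monotone_left_of[OF assms] show ?thesis
  proof cases
    case (1 q)
    have "dvar_bounded \<eta> q p \<and> down_var \<eta> q p \<le> \<eta> q - min (\<eta> p) L"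
    proof (rule down_var_noninc)
      show "q \<le> p" using 1 by simp
      show "\<And>c c'. q \<le> c \<Longrightarrow> c \<le> c' \<Longrightarrow> c' < p \<Longrightarrow> \<eta> c' \<le> \<eta> c" using 1(3) by blast
      fix c assume c: "q \<le> c" "c \<le> p"
      show "min (\<eta> p) L \<le> \<eta> c"
      proof (cases "c = p")
        case False
        then show ?thesis using left_limit_le_noninc[OF L 1(3) c(1)] c(2) by simp
      qed simp
    qed
    then show ?thesis using 1 by blast
  next
    case (2 q)
    have "dvar_bounded \<eta> q p \<and> down_var \<eta> q p \<le> max (\<eta> p) L - \<eta> p"
    proof (rule down_var_nondec)
      show "q \<le> p" using 2 by simp
      show "\<And>c c'. q \<le> c \<Longrightarrow> c \<le> c' \<Longrightarrow> c' < p \<Longrightarrow> \<eta> c \<le> \<eta> c'" using 2(3) by blast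
      fix c assume c: "q \<le> c" "c \<le> p"
      show "\<eta> c \<le> max (\<eta> p) L"
      proof (cases "c = p")
        case False
        then show ?thesis using left_limit_ge_nondec[OF L 2(3) c(1)] c(2) by simp
      qed simp
    qed
    then show ?thesis using 2 by blast
  qed
qed

lemma dvar_bounded_right_of:
  assumes "0 \<le> p"
  shows "\<exists>d>0. \<forall>t. p \<le> t \<and> t \<le> p + d \<longrightarrow> dvar_bounded \<eta> p t"
proof (cases "0 < x p")
  case True
  obtain d where d: "d > 0" "\<forall>c c'. p \<le> c \<longrightarrow> c \<le> c' \<longrightarrow> c' \<le> p + d \<longrightarrow> \<eta> c' \<le> \<eta> c"
    using noninc_right_of[OF assms True] by blast
  have "dvar_bounded \<eta> p t" if "p \<le> t" "t \<le> p + d" for t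
    using down_var_of_noninc[of p t \<eta>] d(2) that by auto
  then show ?thesis using d(1) by blast
next
  case False
  then have "x p < a" using a_pos by linarith
  obtain d where d: "d > 0" "\<forall>c c'. p \<le> c \<longrightarrow> c \<le> c' \<longrightarrow> c' \<le> p + d \<longrightarrow> \<eta> c \<le> \<eta> c'"
    using nondec_right_of[OF assms \<open>x p < a\<close>] by blast
  have "dvar_bounded \<eta> p t" if "p \<le> t" "t \<le> p + d" for t
    using down_var_of_nondec[of p t \<eta>] d(2) that by auto
  then show ?thesis using d(1) by blast
qed

lemma dvar_bounded_eta: "0 \<le> t \<Longrightarrow> dvar_bounded \<eta> 0 t"
proof (rule real_induction[where P = "dvar_bounded \<eta> 0"])
  fix p :: real assume p: "0 \<le> p" and IH: "\<And>t. 0 \<le> t \<Longrightarrow> t < p \<Longrightarrow> dvar_bounded \<eta> 0 t"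
  show "dvar_bounded \<eta> 0 p"
  proof (cases "p = 0")
    case False
    then have "0 < p" using p by simp
    then obtain q where "0 \<le> q" "q < p" "dvar_bounded \<eta> q p"
      using dvar_bounded_left_of by blast
    then show ?thesis using IH dvar_bounded_join[of \<eta> 0 q p] by simp
  qed (simp add: dvar_bounded_point)
next
  fix p :: real assume p: "0 \<le> p" and bdd: "dvar_bounded \<eta> 0 p"
  obtain d where "d > 0" "\<forall>t. p \<le> t \<and> t \<le> p + d \<longrightarrow> dvar_bounded \<eta> p t"
    using dvar_bounded_right_of[OF p] by blast
  then show "\<exists>d>0. \<forall>t. p \<le> t \<and> t \<le> p + d \<longrightarrow> dvar_bounded \<eta> 0 t"
    using dvar_bounded_join[of \<eta> 0 p] p bdd by (intro exI[of _ d]) auto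
qed

(* The candidate decomposition eta = eta_l - eta_u: eta_u accumulates the decreases of
   eta (plus the negative part of eta 0, the atom at time 0), eta_l its increases. *)
definition eta_u :: "real \<Rightarrow> real" where "eta_u t = max (- \<eta> 0) 0 + down_var \<eta> 0 t"
definition eta_l :: "real \<Rightarrow> real" where "eta_l t = \<eta> t + eta_u t"

lemma eta_u_diff: "0 \<le> s \<Longrightarrow> s \<le> t \<Longrightarrow> eta_u t - eta_u s = down_var \<eta> s t"
  using down_var_add[OF dvar_bounded_eta[of t], of s] unfolding eta_u_def by simp

lemma dvar_bounded_sub: "0 \<le> s \<Longrightarrow> s \<le> t \<Longrightarrow> dvar_bounded \<eta> s t"
  using dvar_bounded_subinterval[OF dvar_bounded_eta[of t]] by simp

lemma eta_u_mono: "0 \<le> s \<Longrightarrow> s \<le> t \<Longrightarrow> eta_u s \<le> eta_u t"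
  using eta_u_diff[of s t] down_var_nonneg[OF dvar_bounded_sub[of s t]] by simp

lemma eta_l_mono: "0 \<le> s \<Longrightarrow> s \<le> t \<Longrightarrow> eta_l s \<le> eta_l t"
  using eta_u_diff[of s t] down_var_ge_drop[OF dvar_bounded_sub[of s t]] unfolding eta_l_def by simp

lemma eta_u_0: "eta_u 0 = max (- \<eta> 0) 0"
  unfolding eta_u_def by (simp add: down_var_point)

lemma eta_l_0: "eta_l 0 = max (\<eta> 0) 0"
  unfolding eta_l_def eta_u_0 by simp

lemma eta_u_flat_right:
  assumes "0 \<le> p" "x p < a"
  shows "\<exists>d>0. \<forall>r. p \<le> r \<longrightarrow> r \<le> p + d \<longrightarrow> eta_u r = eta_u p \<and> x r < a"
proof -
  obtain d where d: "d > 0" "\<forall>c c'. p \<le> c \<longrightarrow> c \<le> c' \<longrightarrow> c' \<le> p + d \<longrightarrow> \<eta> c \<le> \<eta> c'"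
      "\<forall>r. p \<le> r \<longrightarrow> r \<le> p + d \<longrightarrow> x r < a"
    using nondec_right_of[OF assms] by blast
  have "eta_u r = eta_u p" if r: "p \<le> r" "r \<le> p + d" for r
  proof -
    have "\<And>c c'. p \<le> c \<Longrightarrow> c \<le> c' \<Longrightarrow> c' \<le> r \<Longrightarrow> \<eta> c \<le> \<eta> c'"
      using d(2) r(2) by (meson order_trans)
    then have "down_var \<eta> p r = 0" using down_var_of_nondec[OF r(1)] by blast
    then show ?thesis using eta_u_diff[OF assms(1) r(1)] by simp
  qed
  then show ?thesis using d(1,3) by blast
qed

lemma eta_l_flat_right:
  assumes "0 \<le> p" "0 < x p"
  shows "\<exists>d>0. \<forall>r. p \<le> r \<longrightarrow> r \<le> p + d \<longrightarrow> eta_l r = eta_l p \<and> 0 < x r"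
proof -
  obtain d where d: "d > 0" "\<forall>c c'. p \<le> c \<longrightarrow> c \<le> c' \<longrightarrow> c' \<le> p + d \<longrightarrow> \<eta> c' \<le> \<eta> c"
      "\<forall>r. p \<le> r \<longrightarrow> r \<le> p + d \<longrightarrow> 0 < x r"
    using noninc_right_of[OF assms] by blast
  have "eta_l r = eta_l p" if r: "p \<le> r" "r \<le> p + d" for r
  proof -
    have "\<And>c c'. p \<le> c \<Longrightarrow> c \<le> c' \<Longrightarrow> c' \<le> r \<Longrightarrow> \<eta> c' \<le> \<eta> c"
      using d(2) r(2) by (meson order_trans)
    then have "down_var \<eta> p r = \<eta> p - \<eta> r" using down_var_of_noninc[OF r(1)] by blast
    then show ?thesis using eta_u_diff[OF assms(1) r(1)] unfolding eta_l_def by simp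
  qed
  then show ?thesis using d(1,3) by blast
qed

lemma eta_u_right:
  assumes "0 \<le> p"
  shows "\<exists>d>0. \<forall>r. p \<le> r \<longrightarrow> r \<le> p + d \<longrightarrow> \<bar>eta_u r - eta_u p\<bar> \<le> \<bar>\<eta> r - \<eta> p\<bar>"
proof (cases "0 < x p")
  case True
  then obtain d where d: "d > 0" "\<forall>r. p \<le> r \<longrightarrow> r \<le> p + d \<longrightarrow> eta_l r = eta_l p \<and> 0 < x r"
    using eta_l_flat_right[OF assms] by blast
  have "\<bar>eta_u r - eta_u p\<bar> \<le> \<bar>\<eta> r - \<eta> p\<bar>" if "p \<le> r" "r \<le> p + d" for r
  proof -
    have "eta_l r = eta_l p" using d(2)[rule_format, OF that] by blast
    then have "eta_u r - eta_u p = \<eta> p - \<eta> r" unfolding eta_l_def by linarith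
    then show ?thesis by (simp add: abs_minus_commute)
  qed
  then show ?thesis using d(1) by blast
next
  case False
  then have "x p < a" using a_pos by linarith
  then obtain d where d: "d > 0" "\<forall>r. p \<le> r \<longrightarrow> r \<le> p + d \<longrightarrow> eta_u r = eta_u p \<and> x r < a"
    using eta_u_flat_right[OF assms] by blast
  have "\<bar>eta_u r - eta_u p\<bar> \<le> \<bar>\<eta> r - \<eta> p\<bar>" if "p \<le> r" "r \<le> p + d" for r
    using d(2)[rule_format, OF that] by simp
  then show ?thesis using d(1) by blast
qed

lemma cadlag_eta_u: "cadlag eta_u"
  unfolding cadlag_def
proof (intro conjI allI impI)
  fix p :: real assume p: "0 \<le> p"
  show "continuous (at_right p) eta_u"
  proof (rule continuous_at_right_I)
    fix e :: real assume e: "0 < e"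
    obtain d where d: "d > 0" "\<forall>r. p \<le> r \<longrightarrow> r \<le> p + d \<longrightarrow> \<bar>eta_u r - eta_u p\<bar> \<le> \<bar>\<eta> r - \<eta> p\<bar>"
      using eta_u_right[OF p] by blast
    have "continuous (at_right p) \<eta>" using cadlag_eta p unfolding cadlag_def by simp
    then obtain b where b: "b > p" "\<forall>y. p < y \<and> y < b \<longrightarrow> \<bar>\<eta> y - \<eta> p\<bar> < e"
      using continuous_at_right_D e by blast
    have "\<bar>eta_u y - eta_u p\<bar> < e" if y: "p < y" "y < min b (p + d)" for y
    proof -
      have "\<bar>eta_u y - eta_u p\<bar> \<le> \<bar>\<eta> y - \<eta> p\<bar>" using d(2) y by simp
      moreover have "\<bar>\<eta> y - \<eta> p\<bar> < e" using b(2) y by simp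
      ultimately show ?thesis by linarith
    qed
    moreover have "p < min b (p + d)" using b(1) d(1) by simp
    ultimately show "\<exists>b>p. \<forall>y. p < y \<and> y < b \<longrightarrow> \<bar>eta_u y - eta_u p\<bar> < e" by blast
  qed
next
  fix p :: real assume "0 < p"
  then show "\<exists>l. (eta_u \<longlongrightarrow> l) (at_left p)"
    by (rule left_limit_exists_mono[of p eta_u "eta_u p"]) (use eta_u_mono in auto)
qed

lemma cadlag_eta_l: "cadlag eta_l"
  unfolding eta_l_def[abs_def] by (rule cadlag_add[OF cadlag_eta cadlag_eta_u])

lemma nondecr_eta_u: "nondecr eta_u"
  unfolding nondecr_def using cadlag_eta_u eta_u_mono by (auto intro: mono_onI)

lemma nondecr_eta_l: "nondecr eta_l"
  unfolding nondecr_def using cadlag_eta_l eta_l_mono by (auto intro: mono_onI)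

(* Neither part of the decomposition jumps up at times where it must stay flat: eta_u has
   no jump where x < a and eta_l none where x > 0 (including the atom at time 0).  For
   p > 0 this reduces to small downward variation of eta on some [q,p]. *)
lemma down_var_small_left_off_top:
  assumes p: "0 < p" and "x p < a" "0 < e"
  shows "\<exists>q. 0 \<le> q \<and> q < p \<and> down_var \<eta> q p < e"
proof -
  obtain L where L: "(\<eta> \<longlongrightarrow> L) (at_left p)" using cadlag_eta p unfolding cadlag_def by blast
  have L_le: "L \<le> \<eta> p" using jump_off_top[OF p assms(2) L] .
  show ?thesis
  proof (cases rule: monotone_left_of[OF p])
    case (1 q0)
    obtain q where q: "q0 \<le> q" "q < p" "\<bar>\<eta> q - L\<bar> < e"
      using left_limit_approx[OF L 1(2) assms(3)] by blast
    have "dvar_bounded \<eta> q p \<and> down_var \<eta> q p \<le> \<eta> q - L"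
    proof (rule down_var_noninc)
      show "q \<le> p" using q by simp
      show "\<And>c c'. q \<le> c \<Longrightarrow> c \<le> c' \<Longrightarrow> c' < p \<Longrightarrow> \<eta> c' \<le> \<eta> c"
        using 1(3) q(1) by (meson order_trans)
      fix c assume c: "q \<le> c" "c \<le> p"
      show "L \<le> \<eta> c"
      proof (cases "c = p")
        case False
        then show ?thesis using left_limit_le_noninc[OF L 1(3) order_trans[OF q(1) c(1)]] c(2) by simp
      qed (use L_le in simp)
    qed
    then show ?thesis using q 1 by (intro exI[of _ q]) auto
  next
    case (2 q0)
    have "dvar_bounded \<eta> q0 p \<and> down_var \<eta> q0 p \<le> \<eta> p - \<eta> p"
    proof (rule down_var_nondec)
      show "q0 \<le> p" using 2 by simp
      show "\<And>c c'. q0 \<le> c \<Longrightarrow> c \<le> c' \<Longrightarrow> c' < p \<Longrightarrow> \<eta> c \<le> \<eta> c'" using 2(3) by blast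
      fix c assume c: "q0 \<le> c" "c \<le> p"
      show "\<eta> c \<le> \<eta> p"
      proof (cases "c = p")
        case False
        then show ?thesis using left_limit_ge_nondec[OF L 2(3) c(1)] c(2) L_le by simp
      qed simp
    qed
    then show ?thesis using 2 assms(3) by (intro exI[of _ q0]) auto
  qed
qed

lemma down_var_small_left_off_zero:
  assumes p: "0 < p" and "0 < x p" "0 < e"
  shows "\<exists>q. 0 \<le> q \<and> q < p \<and> \<eta> p - \<eta> q + down_var \<eta> q p < e"
proof -
  obtain L where L: "(\<eta> \<longlongrightarrow> L) (at_left p)" using cadlag_eta p unfolding cadlag_def by blast
  have L_ge: "\<eta> p \<le> L" using jump_off_zero[OF p assms(2) L] .
  show ?thesis
  proof (cases rule: monotone_left_of[OF p])
    case (1 q0)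
    have "dvar_bounded \<eta> q0 p \<and> down_var \<eta> q0 p \<le> \<eta> q0 - \<eta> p"
    proof (rule down_var_noninc)
      show "q0 \<le> p" using 1 by simp
      show "\<And>c c'. q0 \<le> c \<Longrightarrow> c \<le> c' \<Longrightarrow> c' < p \<Longrightarrow> \<eta> c' \<le> \<eta> c" using 1(3) by blast
      fix c assume c: "q0 \<le> c" "c \<le> p"
      show "\<eta> p \<le> \<eta> c"
      proof (cases "c = p")
        case False
        then show ?thesis using left_limit_le_noninc[OF L 1(3) c(1)] c(2) L_ge by simp
      qed simp
    qed
    then show ?thesis using 1 assms(3) by (intro exI[of _ q0]) auto
  next
    case (2 q0)
    obtain q where q: "q0 \<le> q" "q < p" "\<bar>\<eta> q - L\<bar> < e"
      using left_limit_approx[OF L 2(2) assms(3)] by blast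
    have "dvar_bounded \<eta> q p \<and> down_var \<eta> q p \<le> L - \<eta> p"
    proof (rule down_var_nondec)
      show "q \<le> p" using q by simp
      show "\<And>c c'. q \<le> c \<Longrightarrow> c \<le> c' \<Longrightarrow> c' < p \<Longrightarrow> \<eta> c \<le> \<eta> c'"
        using 2(3) q(1) by (meson order_trans)
      fix c assume c: "q \<le> c" "c \<le> p"
      show "\<eta> c \<le> L"
      proof (cases "c = p")
        case False
        then show ?thesis using left_limit_ge_nondec[OF L 2(3) order_trans[OF q(1) c(1)]] c(2) by simp
      qed (use L_ge in simp)
    qed
    then show ?thesis using q 2 by (intro exI[of _ q]) auto
  qed
qed

lemma eta_u_no_jump:
  assumes "0 \<le> p" "x p < a" "0 < e"
  shows "\<exists>q<p. ext0 eta_u p - ext0 eta_u q < e"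
proof (cases "p = 0")
  case True
  then have "eta_u p = 0" using eta_u_0 start_off_top assms(2) by simp
  then show ?thesis using True assms(3) by (intro exI[of _ "-1"]) (simp add: ext0_def)
next
  case False
  then obtain q where "0 \<le> q" "q < p" "down_var \<eta> q p < e"
    using down_var_small_left_off_top[of p e] assms by force
  then show ?thesis using eta_u_diff[of q p] by (intro exI[of _ q]) (simp add: ext0_def)
qed

lemma eta_l_no_jump:
  assumes "0 \<le> p" "0 < x p" "0 < e"
  shows "\<exists>q<p. ext0 eta_l p - ext0 eta_l q < e"
proof (cases "p = 0")
  case True
  then have "eta_l p = 0" using eta_l_0 start_off_zero assms(2) by simp
  then show ?thesis using True assms(3) by (intro exI[of _ "-1"]) (simp add: ext0_def)
next
  case False
  then obtain q where "0 \<le> q" "q < p" "\<eta> p - \<eta> q + down_var \<eta> q p < e"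
    using down_var_small_left_off_zero[of p e] assms by force
  then show ?thesis using eta_u_diff[of q p] unfolding eta_l_def
    by (intro exI[of _ q]) (simp add: ext0_def)
qed

lemma LS_null_eta_u: "LS_null eta_u {s. 0 \<le> s \<and> x s < a}"
proof (rule LS_null_of_locally_flat[OF nondecr_eta_u])
  show "0 \<le> eta_u 0" using eta_u_0 by simp
  show "\<And>p. 0 \<le> p \<Longrightarrow> x p < a \<Longrightarrow>
      \<exists>d>0. \<forall>r. p \<le> r \<longrightarrow> r \<le> p + d \<longrightarrow> eta_u r = eta_u p \<and> x r < a"
    by (rule eta_u_flat_right)
  show "\<And>p e. 0 \<le> p \<Longrightarrow> x p < a \<Longrightarrow> 0 < e \<Longrightarrow> \<exists>q<p. ext0 eta_u p - ext0 eta_u q < e"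
    by (rule eta_u_no_jump)
qed

lemma LS_null_eta_l: "LS_null eta_l {s. 0 \<le> s \<and> 0 < x s}"
proof (rule LS_null_of_locally_flat[OF nondecr_eta_l])
  show "0 \<le> eta_l 0" using eta_l_0 by simp
  show "\<And>p. 0 \<le> p \<Longrightarrow> 0 < x p \<Longrightarrow>
      \<exists>d>0. \<forall>r. p \<le> r \<longrightarrow> r \<le> p + d \<longrightarrow> eta_l r = eta_l p \<and> 0 < x r"
    by (rule eta_l_flat_right)
  show "\<And>p e. 0 \<le> p \<Longrightarrow> 0 < x p \<Longrightarrow> 0 < e \<Longrightarrow> \<exists>q<p. ext0 eta_l p - ext0 eta_l q < e"
    by (rule eta_l_no_jump)
qed

theorem skorokhod_solution:
  assumes "\<And>t. 0 \<le> t \<Longrightarrow> x t = \<psi> t + \<eta> t"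
  shows "skorokhod a \<psi> x \<eta>"
proof -
  have decomp: "\<And>t. 0 \<le> t \<Longrightarrow> \<eta> t = eta_l t - eta_u t" unfolding eta_l_def by simp
  have "bv \<eta>" by (rule bv_of_nondecr_diff[OF cadlag_eta nondecr_eta_l nondecr_eta_u decomp])
  moreover have "\<forall>t\<ge>0. x t = \<psi> t + \<eta> t \<and> 0 \<le> x t \<and> x t \<le> a" using assms x_bounds by simp
  moreover have "eta_l 0 \<ge> 0" "eta_u 0 \<ge> 0" using eta_l_0 eta_u_0 by simp_all
  ultimately show ?thesis
    unfolding skorokhod_def using cadlag_x nondecr_eta_l nondecr_eta_u decomp LS_null_eta_l LS_null_eta_u
    by blast
qed

end

lemma positive_excursion_start:
  fixes D :: "real \<Rightarrow> real"
  assumes "0 \<le> t" "0 < D t"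
  shows "\<exists>s. 0 \<le> s \<and> s \<le> t \<and> (\<forall>u. s < u \<and> u \<le> t \<longrightarrow> 0 < D u)
    \<and> (\<forall>r. 0 \<le> r \<and> r < s \<longrightarrow> (\<exists>v. r \<le> v \<and> v \<le> s \<and> D v \<le> 0))"
proof -
  define S where "S = {r. 0 \<le> r \<and> r \<le> t \<and> (\<forall>u. r \<le> u \<and> u \<le> t \<longrightarrow> 0 < D u)}"
  have tS: "t \<in> S" using assms unfolding S_def by auto
  have bdd: "bdd_below S" unfolding S_def bdd_below_def by auto
  define s where "s = Inf S"
  have s0: "0 \<le> s" unfolding s_def by (rule cInf_greatest) (use tS S_def in auto)
  have st: "s \<le> t" unfolding s_def by (rule cInf_lower[OF tS bdd])
  have pos: "0 < D u" if u: "s < u" "u \<le> t" for u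
  proof -
    obtain r where "r \<in> S" "r < u" using cInf_less_iff[of S u] tS bdd u(1) unfolding s_def by auto
    then show ?thesis using u unfolding S_def by auto
  qed
  have before: "\<exists>v. r \<le> v \<and> v \<le> s \<and> D v \<le> 0" if r: "0 \<le> r" "r < s" for r
  proof -
    have "r \<notin> S" using cInf_lower[of r S] bdd r unfolding s_def by force
    then obtain v where v: "r \<le> v" "v \<le> t" "\<not> 0 < D v" using r st unfolding S_def by auto
    then have "v \<le> s" using pos[of v] by force
    then show ?thesis using v by auto
  qed
  show ?thesis using s0 st pos before by blast
qed

lemma no_positive_excursion:
  fixes D :: "real \<Rightarrow> real"
  assumes G1: "nondecr G1" "0 \<le> G1 0" and G2: "nondecr G2" "0 \<le> G2 0"
    and N1: "LS_null G1 A1" and N2: "LS_null G2 A2"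
    and pos_in: "\<And>r. 0 \<le> r \<Longrightarrow> 0 < D r \<Longrightarrow> r \<in> A1 \<and> r \<in> A2"
    and incr: "\<And>v w. v \<le> w \<Longrightarrow> 0 \<le> w \<Longrightarrow>
      ext0 D w - ext0 D v \<le> (ext0 G1 w - ext0 G1 v) + (ext0 G2 w - ext0 G2 v)"
    and t: "0 \<le> t"
  shows "D t \<le> 0"
proof (rule ccontr)
  assume "\<not> D t \<le> 0"
  then have Dt: "0 < D t" by simp
  obtain s where s: "0 \<le> s" "s \<le> t" "\<forall>u. s < u \<and> u \<le> t \<longrightarrow> 0 < D u"
      "\<forall>r. 0 \<le> r \<and> r < s \<longrightarrow> (\<exists>v. r \<le> v \<and> v \<le> s \<and> D v \<le> 0)"
    using positive_excursion_start[where t=t and D=D, OF t Dt] by blast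
  have in_A: "r \<in> A1 \<and> r \<in> A2" if "0 \<le> r" "s \<le> r" "r \<le> t" "0 < D r" for r
    using pos_in that by blast
  show False
  proof (cases "D s \<le> 0")
    case True
    have "{s<..t} \<subseteq> A1" "{s<..t} \<subseteq> A2" using in_A s(1,3) by (auto simp: subset_iff)
    then have "G1 t = G1 s" "G2 t = G2 s"
      using LS_null_flat[OF G1 N1 s(1,2)] LS_null_flat[OF G2 N2 s(1,2)] by auto
    then show False using incr[OF s(2) t] True Dt s(1) t by (simp add: ext0_def)
  next
    case False
    then have "0 < D u" if "s \<le> u" "u \<le> t" for u using s(3) that by (cases "s = u") auto
    then have sub: "{s..t} \<subseteq> A1" "{s..t} \<subseteq> A2" using in_A s(1) by (auto simp: subset_iff)
    define e where "e = D t / 2"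
    have e: "0 < e" using Dt unfolding e_def by simp
    obtain q1 where q1: "q1 < s" "\<forall>u. q1 \<le> u \<longrightarrow> u < s \<longrightarrow> ext0 G1 t - ext0 G1 u < e"
      using LS_null_small_increment[OF G1 N1 s(2) sub(1) e] by blast
    obtain q2 where q2: "q2 < s" "\<forall>u. q2 \<le> u \<longrightarrow> u < s \<longrightarrow> ext0 G2 t - ext0 G2 u < e"
      using LS_null_small_increment[OF G2 N2 s(2) sub(2) e] by blast
    obtain v where v: "max q1 q2 \<le> v" "v < s" "ext0 D v \<le> 0"
    proof (cases "s = 0")
      case True
      then show thesis using that[of "max q1 q2"] q1 q2 by (simp add: ext0_def)
    next
      case nonzero: False
      obtain v where v: "max 0 (max q1 q2) \<le> v" "v \<le> s" "D v \<le> 0"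
        using s(4)[rule_format, of "max 0 (max q1 q2)"] q1 q2 s(1) nonzero by auto
      moreover have "v \<noteq> s" using v(3) \<open>\<not> D s \<le> 0\<close> by auto
      ultimately show thesis using that[of v] by (simp add: ext0_def)
    qed
    have "ext0 D t - ext0 D v < e + e"
      using incr[of v t] q1(2)[rule_format, of v] q2(2)[rule_format, of v] v s(2) t by simp
    then show False using v(3) t unfolding e_def by (simp add: ext0_def)
  qed
qed

lemma skorokhod_le:
  assumes s1: "skorokhod a \<psi> \<phi>1 \<eta>1" and s2: "skorokhod a \<psi> \<phi>2 \<eta>2" and t: "0 \<le> t"
  shows "\<phi>1 t \<le> \<phi>2 t"
proof -
  obtain l1 u1 where d1: "nondecr l1" "nondecr u1" "l1 0 \<ge> 0" "u1 0 \<ge> 0"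
      "\<forall>t\<ge>0. \<eta>1 t = l1 t - u1 t"
      "LS_null l1 {s. 0 \<le> s \<and> \<phi>1 s > 0}" "LS_null u1 {s. 0 \<le> s \<and> \<phi>1 s < a}"
    using s1 unfolding skorokhod_def by blast
  obtain l2 u2 where d2: "nondecr l2" "nondecr u2" "l2 0 \<ge> 0" "u2 0 \<ge> 0"
      "\<forall>t\<ge>0. \<eta>2 t = l2 t - u2 t"
      "LS_null l2 {s. 0 \<le> s \<and> \<phi>2 s > 0}" "LS_null u2 {s. 0 \<le> s \<and> \<phi>2 s < a}"
    using s2 unfolding skorokhod_def by blast
  have b1: "\<forall>t\<ge>0. \<phi>1 t = \<psi> t + \<eta>1 t \<and> 0 \<le> \<phi>1 t \<and> \<phi>1 t \<le> a"
    and b2: "\<forall>t\<ge>0. \<phi>2 t = \<psi> t + \<eta>2 t \<and> 0 \<le> \<phi>2 t \<and> \<phi>2 t \<le> a"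
    using s1 s2 unfolding skorokhod_def by blast+
  have diff: "\<phi>1 r - \<phi>2 r = (l1 r + u2 r) - (u1 r + l2 r)" if "0 \<le> r" for r
    using b1 b2 d1(5) d2(5) that by simp
  have "\<phi>1 t - \<phi>2 t \<le> 0"
  proof (rule no_positive_excursion[where D = "\<lambda>r. \<phi>1 r - \<phi>2 r" and t = t,
        OF d1(1,3) d2(2,4) d1(6) d2(7)])
    show "r \<in> {s. 0 \<le> s \<and> \<phi>1 s > 0} \<and> r \<in> {s. 0 \<le> s \<and> \<phi>2 s < a}"
      if "0 \<le> r" "0 < \<phi>1 r - \<phi>2 r" for r
      using b1 b2 that by force
    show "ext0 (\<lambda>r. \<phi>1 r - \<phi>2 r) w - ext0 (\<lambda>r. \<phi>1 r - \<phi>2 r) v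
        \<le> (ext0 l1 w - ext0 l1 v) + (ext0 u2 w - ext0 u2 v)" if vw: "v \<le> w" "0 \<le> w" for v w
    proof (cases "v < 0")
      case True
      have "0 \<le> u1 w" "0 \<le> l2 w"
        using nondecr_mono[OF d1(2), of 0 w] nondecr_mono[OF d2(1), of 0 w] d1(4) d2(3) vw by auto
      then show ?thesis using diff[OF vw(2)] True vw by (simp add: ext0_def)
    next
      case False
      have "u1 v \<le> u1 w" "l2 v \<le> l2 w"
        using nondecr_mono[OF d1(2)] nondecr_mono[OF d2(1)] vw False by auto
      then show ?thesis using diff[of v] diff[OF vw(2)] False vw by (simp add: ext0_def)
    qed
  qed (rule t)
  then show ?thesis by simp
qed

lemma skorokhod_unique:
  assumes "skorokhod a \<psi> \<phi>1 \<eta>1" "skorokhod a \<psi> \<phi>2 \<eta>2" "0 \<le> t"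
  shows "\<phi>1 t = \<phi>2 t"
  using skorokhod_le[OF assms(1,2,3)] skorokhod_le[OF assms(2,1,3)] by simp

lemma Gamma0a_eq_solution:
  assumes sol: "skorokhod a \<psi> \<phi> \<eta>" and t: "0 \<le> t"
  shows "Gamma0a a \<psi> t = \<phi> t"
  unfolding Gamma0a_def
proof (rule the_equality)
  show "\<exists>\<phi>' \<eta>'. skorokhod a \<psi> \<phi>' \<eta>' \<and> \<phi>' t = \<phi> t" using sol by blast
  fix y assume "\<exists>\<phi>' \<eta>'. skorokhod a \<psi> \<phi>' \<eta>' \<and> \<phi>' t = y"
  then show "y = \<phi> t" using skorokhod_unique[OF _ sol t] by blast
qed

lemma SUP_upper_bounded:
  fixes f :: "'a \<Rightarrow> real"
  shows "(\<And>s. s \<in> S \<Longrightarrow> f s \<le> M) \<Longrightarrow> s \<in> S \<Longrightarrow> f s \<le> (SUP s\<in>S. f s)"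
  by (rule cSUP_upper) (auto simp: bdd_above_def)

lemma SUP_least_nonempty:
  fixes f :: "'a \<Rightarrow> real"
  shows "S \<noteq> {} \<Longrightarrow> (\<And>s. s \<in> S \<Longrightarrow> f s \<le> M) \<Longrightarrow> (SUP s\<in>S. f s) \<le> M"
  by (rule cSUP_least) auto

lemma INF_lower_bounded:
  fixes f :: "'a \<Rightarrow> real"
  shows "(\<And>s. s \<in> S \<Longrightarrow> M \<le> f s) \<Longrightarrow> s \<in> S \<Longrightarrow> (INF s\<in>S. f s) \<le> f s"
  by (rule cINF_lower) (auto simp: bdd_below_def)

lemma INF_greatest_nonempty:
  fixes f :: "'a \<Rightarrow> real"
  shows "S \<noteq> {} \<Longrightarrow> (\<And>s. s \<in> S \<Longrightarrow> M \<le> f s) \<Longrightarrow> M \<le> (INF s\<in>S. f s)"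
  by (rule cINF_greatest) auto

lemma less_SUP_bounded:
  fixes f :: "'a \<Rightarrow> real"
  assumes "S \<noteq> {}" "\<And>s. s \<in> S \<Longrightarrow> f s \<le> M" "y < (SUP s\<in>S. f s)"
  shows "\<exists>s\<in>S. y < f s"
proof -
  have b: "bdd_above (f ` S)" using assms(2) by (auto simp: bdd_above_def)
  show ?thesis using less_cSUP_iff[OF assms(1) b] assms(3) by auto
qed

lemma max_zero_lipschitz: "\<bar>u - v\<bar> \<le> (e::real) \<Longrightarrow> max u 0 \<le> max v 0 + e"
  by (auto simp: max_def abs_le_iff)

lemma min_lower_bound_shift: "min x y \<le> z \<Longrightarrow> x \<le> y + c \<Longrightarrow> 0 \<le> c \<Longrightarrow> x - c \<le> (z::real)"
  unfolding min_def by (auto split: if_splits)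

lemma max_upper_bound_shift: "z \<le> max x y \<Longrightarrow> y \<le> x + c \<Longrightarrow> 0 \<le> c \<Longrightarrow> z \<le> x + (c::real)"
  unfolding max_def by (auto split: if_splits)

locale reflection_map =
  fixes a :: real and \<psi> :: "real \<Rightarrow> real"
  assumes a_pos: "0 < a" and cadlag_psi: "cadlag \<psi>"
begin

definition deficit :: "real \<Rightarrow> real" where "deficit s = max (- \<psi> s) 0"
definition lower_push :: "real \<Rightarrow> real" where "lower_push t = (SUP s\<in>{0..t}. deficit s)"

lemma deficit_bounded: "0 \<le> t \<Longrightarrow> \<exists>M. \<forall>s. 0 \<le> s \<and> s \<le> t \<longrightarrow> deficit s \<le> M"
proof -
  assume "0 \<le> t"
  then obtain K where K: "\<forall>s. 0 \<le> s \<and> s \<le> t \<longrightarrow> \<bar>\<psi> s\<bar> \<le> K" using cadlag_bounded[OF cadlag_psi] by blast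
  have "deficit s \<le> K" if "0 \<le> s" "s \<le> t" for s using K that unfolding deficit_def by force
  then show ?thesis by blast
qed

lemma deficit_le_lower_push: "0 \<le> s \<Longrightarrow> s \<le> t \<Longrightarrow> deficit s \<le> lower_push t"
proof -
  assume s: "0 \<le> s" "s \<le> t"
  obtain M where M: "\<forall>s. 0 \<le> s \<and> s \<le> t \<longrightarrow> deficit s \<le> M" using deficit_bounded s by fastforce
  show ?thesis unfolding lower_push_def by (rule SUP_upper_bounded[of _ _ M]) (use M s in auto)
qed

lemma lower_push_le: "0 \<le> t \<Longrightarrow> (\<And>s. 0 \<le> s \<Longrightarrow> s \<le> t \<Longrightarrow> deficit s \<le> M) \<Longrightarrow> lower_push t \<le> M"
  unfolding lower_push_def by (rule SUP_least_nonempty) auto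

lemma deficit_nonneg: "0 \<le> deficit s" unfolding deficit_def by simp

lemma lower_push_nonneg: "0 \<le> t \<Longrightarrow> 0 \<le> lower_push t"
  using deficit_le_lower_push[of t t] deficit_nonneg[of t] by simp

lemma lower_push_mono: "0 \<le> s \<Longrightarrow> s \<le> t \<Longrightarrow> lower_push s \<le> lower_push t"
  by (rule lower_push_le) (use deficit_le_lower_push in auto)

lemma lower_push_0: "lower_push 0 = deficit 0"
  unfolding lower_push_def by simp

(* lower_push is right continuous: just after p the deficit differs little from its value
   at p, which is already counted in lower_push p. *)
lemma lower_push_continuous_at_right:
  assumes p: "0 \<le> p"
  shows "continuous (at_right p) lower_push"
proof (rule continuous_at_right_I)
  fix e :: real assume e: "0 < e"
  have "continuous (at_right p) \<psi>" using cadlag_psi p unfolding cadlag_def by simp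
  then obtain b where b: "b > p" "\<forall>y. p < y \<and> y < b \<longrightarrow> \<bar>\<psi> y - \<psi> p\<bar> < e / 2"
    using continuous_at_right_D[of p \<psi> "e / 2"] e by auto
  have "\<bar>lower_push y - lower_push p\<bar> < e" if y: "p < y" "y < b" for y
  proof -
    have "lower_push y \<le> lower_push p + e / 2"
    proof (rule lower_push_le)
      show "0 \<le> y" using p y by simp
      fix s assume s: "0 \<le> s" "s \<le> y"
      show "deficit s \<le> lower_push p + e / 2"
      proof (cases "s \<le> p")
        case True
        then show ?thesis using deficit_le_lower_push[OF s(1) True] e by simp
      next
        case False
        then have "\<bar>\<psi> s - \<psi> p\<bar> < e / 2" using b(2) s y by auto
        then have "\<bar>(- \<psi> s) - (- \<psi> p)\<bar> \<le> e / 2" by (simp add: abs_minus_commute)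
        then have "deficit s \<le> deficit p + e / 2" unfolding deficit_def by (rule max_zero_lipschitz)
        then show ?thesis using deficit_le_lower_push[OF p order_refl] by simp
      qed
    qed
    moreover have "lower_push p \<le> lower_push y" using lower_push_mono p y by simp
    ultimately show ?thesis using e by simp
  qed
  then show "\<exists>b>p. \<forall>y. p < y \<and> y < b \<longrightarrow> \<bar>lower_push y - lower_push p\<bar> < e" using b(1) by blast
qed

lemma cadlag_lower_push: "cadlag lower_push"
  unfolding cadlag_def
proof (intro conjI allI impI)
  fix p :: real
  show "0 \<le> p \<Longrightarrow> continuous (at_right p) lower_push" by (rule lower_push_continuous_at_right)
  show "\<exists>l. (lower_push \<longlongrightarrow> l) (at_left p)" if "0 < p"
    by (rule left_limit_exists_mono[OF that, of lower_push "lower_push p"]) (use lower_push_mono in auto)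
qed

definition phi :: "real \<Rightarrow> real" where "phi = Gamma0 \<psi>"
definition excess :: "real \<Rightarrow> real" where "excess s = max (phi s - a) 0"
definition inf_phi :: "real \<Rightarrow> real \<Rightarrow> real" where "inf_phi s t = (INF u\<in>{s..t}. phi u)"
definition push_cand :: "real \<Rightarrow> real \<Rightarrow> real" where "push_cand s t = min (excess s) (inf_phi s t)"
definition upper_push :: "real \<Rightarrow> real" where "upper_push t = (SUP s\<in>{0..t}. push_cand s t)"

lemma phi_eq: "phi t = \<psi> t + lower_push t"
  unfolding phi_def Gamma0_def lower_push_def deficit_def by simp

lemma Lambda_eq: "Lambda a (Gamma0 \<psi>) t = phi t - upper_push t"
  unfolding Lambda_def upper_push_def push_cand_def excess_def inf_phi_def phi_def ..

lemma cadlag_phi: "cadlag phi"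
  unfolding phi_eq[abs_def] by (rule cadlag_add[OF cadlag_psi cadlag_lower_push])

lemma phi_nonneg: "0 \<le> t \<Longrightarrow> 0 \<le> phi t"
  using deficit_le_lower_push[of t t] unfolding phi_eq deficit_def by simp

lemma excess_nonneg: "0 \<le> excess s" unfolding excess_def by simp

lemma excess_le_phi: "0 \<le> t \<Longrightarrow> excess t \<le> phi t"
  using phi_nonneg[of t] a_pos unfolding excess_def by simp

lemma inf_phi_le: "0 \<le> s \<Longrightarrow> s \<le> u \<Longrightarrow> u \<le> t \<Longrightarrow> inf_phi s t \<le> phi u"
  unfolding inf_phi_def by (rule INF_lower_bounded[where M=0]) (use phi_nonneg in auto)

lemma inf_phi_ge: "s \<le> t \<Longrightarrow> (\<And>u. s \<le> u \<Longrightarrow> u \<le> t \<Longrightarrow> m \<le> phi u) \<Longrightarrow> m \<le> inf_phi s t"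
  unfolding inf_phi_def by (rule INF_greatest_nonempty) auto

lemma inf_phi_point: "0 \<le> t \<Longrightarrow> inf_phi t t = phi t"
  unfolding inf_phi_def by simp

lemma push_cand_le_phi: "0 \<le> s \<Longrightarrow> s \<le> t \<Longrightarrow> push_cand s t \<le> phi t"
  using inf_phi_le[of s t t] unfolding push_cand_def by simp

lemma push_cand_le_upper_push: "0 \<le> s \<Longrightarrow> s \<le> t \<Longrightarrow> push_cand s t \<le> upper_push t"
  unfolding upper_push_def by (rule SUP_upper_bounded[where M="phi t"]) (use push_cand_le_phi in auto)

lemma upper_push_le: "0 \<le> t \<Longrightarrow> (\<And>s. 0 \<le> s \<Longrightarrow> s \<le> t \<Longrightarrow> push_cand s t \<le> M) \<Longrightarrow> upper_push t \<le> M"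
  unfolding upper_push_def by (rule SUP_least_nonempty) auto

lemma upper_push_le_phi: "0 \<le> t \<Longrightarrow> upper_push t \<le> phi t"
  by (rule upper_push_le) (use push_cand_le_phi in auto)

lemma excess_le_upper_push: "0 \<le> t \<Longrightarrow> excess t \<le> upper_push t"
proof -
  assume t: "0 \<le> t"
  have "push_cand t t = excess t" unfolding push_cand_def using inf_phi_point[OF t] excess_le_phi[OF t] by simp
  then show ?thesis using push_cand_le_upper_push[OF t order_refl] by simp
qed

lemma upper_push_nonneg: "0 \<le> t \<Longrightarrow> 0 \<le> upper_push t"
  using excess_le_upper_push excess_nonneg order_trans by blast

lemma upper_push_0: "upper_push 0 = excess 0"
proof -
  have "upper_push 0 = push_cand 0 0" unfolding upper_push_def by simp
  also have "\<dots> = excess 0" unfolding push_cand_def using inf_phi_point[of 0] excess_le_phi[of 0] by simp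
  finally show ?thesis .
qed

lemma upper_push_lower_bound:
  assumes "0 \<le> s" "s \<le> t" "\<And>u. s < u \<Longrightarrow> u \<le> t \<Longrightarrow> m \<le> phi u"
  shows "min (upper_push s) m \<le> upper_push t"
proof -
  have key: "min (push_cand q s) m \<le> push_cand q t" if q: "0 \<le> q" "q \<le> s" for q
  proof -
    have "min (inf_phi q s) m \<le> inf_phi q t"
    proof (rule inf_phi_ge)
      show "q \<le> t" using q assms by simp
      fix u assume u: "q \<le> u" "u \<le> t"
      show "min (inf_phi q s) m \<le> phi u"
      proof (cases "u \<le> s")
        case True then show ?thesis using inf_phi_le[OF q(1) u(1) True] by simp
      next
        case False then show ?thesis using assms(3)[of u] u by simp
      qed
    qed
    then show ?thesis unfolding push_cand_def by linarith
  qed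
  show ?thesis
  proof (cases "upper_push s \<le> m")
    case True
    have "upper_push s \<le> upper_push t"
    proof (rule upper_push_le[OF assms(1)])
      fix q assume q: "0 \<le> q" "q \<le> s"
      have "push_cand q s \<le> upper_push s" using push_cand_le_upper_push[OF q] .
      then have "push_cand q s \<le> push_cand q t" using key[OF q] True by linarith
      moreover have "push_cand q t \<le> upper_push t" using push_cand_le_upper_push[of q t] q assms by simp
      ultimately show "push_cand q s \<le> upper_push t" by simp
    qed
    then show ?thesis by simp
  next
    case False
    then have "m < (SUP q\<in>{0..s}. push_cand q s)" unfolding upper_push_def by simp
    then obtain q where q: "q \<in> {0..s}" "m < push_cand q s"
      using less_SUP_bounded[of "{0..s}" "\<lambda>q. push_cand q s" "phi s" m] push_cand_le_phi assms(1) by force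
    then have "m \<le> push_cand q t" using key[of q] by auto
    moreover have "push_cand q t \<le> upper_push t" using push_cand_le_upper_push[of q t] q assms by simp
    ultimately show ?thesis by simp
  qed
qed

lemma upper_push_upper_bound:
  assumes "0 \<le> s" "s \<le> t" "\<And>r. s < r \<Longrightarrow> r \<le> t \<Longrightarrow> excess r \<le> M"
  shows "upper_push t \<le> max (upper_push s) M"
proof (rule upper_push_le)
  show "0 \<le> t" using assms by simp
  fix q assume q: "0 \<le> q" "q \<le> t"
  show "push_cand q t \<le> max (upper_push s) M"
  proof (cases "q \<le> s")
    case True
    have "inf_phi q t \<le> inf_phi q s"
      by (rule inf_phi_ge) (use True q assms in \<open>auto intro: inf_phi_le\<close>)
    then have "push_cand q t \<le> push_cand q s" unfolding push_cand_def by linarith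
    also have "\<dots> \<le> upper_push s" using push_cand_le_upper_push[OF q(1) True] .
    finally show ?thesis by simp
  next
    case False
    then have "excess q \<le> M" using assms(3) q by simp
    then show ?thesis unfolding push_cand_def by linarith
  qed
qed

lemma upper_push_oscillation:
  assumes "0 \<le> y" "y \<le> z" "0 < e" "\<And>u. y \<le> u \<Longrightarrow> u \<le> z \<Longrightarrow> \<bar>phi u - L\<bar> \<le> e"
  shows "\<bar>upper_push z - upper_push y\<bar> \<le> 2 * e"
proof -
  have "min (upper_push y) (L - e) \<le> upper_push z"
  proof (rule upper_push_lower_bound)
    show "0 \<le> y" "y \<le> z" using assms by auto
    fix u assume u: "y < u" "u \<le> z"
    have "\<bar>phi u - L\<bar> \<le> e" using assms(4)[of u] u by simp
    then show "L - e \<le> phi u" by (simp add: abs_le_iff)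
  qed
  moreover have "upper_push y \<le> (L - e) + 2 * e" using upper_push_le_phi[of y] assms(4)[of y] assms(1,2) by (auto simp: abs_le_iff)
  ultimately have lo: "upper_push y - 2 * e \<le> upper_push z" by (rule min_lower_bound_shift) (use assms in simp)
  have "upper_push z \<le> max (upper_push y) (max (L - a) 0 + e)"
  proof (rule upper_push_upper_bound)
    show "0 \<le> y" "y \<le> z" using assms by auto
    fix r assume r: "y < r" "r \<le> z"
    have "\<bar>(phi r - a) - (L - a)\<bar> \<le> e" using assms(4)[of r] r by simp
    then show "excess r \<le> max (L - a) 0 + e" unfolding excess_def by (rule max_zero_lipschitz)
  qed
  moreover have "max (L - a) 0 + e \<le> upper_push y + 2 * e"
  proof -
    have "\<bar>(L - a) - (phi y - a)\<bar> \<le> e" using assms(4)[of y] assms(2) by (simp add: abs_minus_commute)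
    then have "max (L - a) 0 \<le> excess y + e" unfolding excess_def by (rule max_zero_lipschitz)
    then show ?thesis using excess_le_upper_push[OF assms(1)] by simp
  qed
  ultimately have hi: "upper_push z \<le> upper_push y + 2 * e" by (rule max_upper_bound_shift) (use assms in simp)
  show ?thesis using lo hi by (simp add: abs_le_iff)
qed

lemma upper_push_continuous_at_right:
  assumes p: "0 \<le> p"
  shows "continuous (at_right p) upper_push"
proof (rule continuous_at_right_I)
  fix e :: real assume e: "0 < e"
  have "continuous (at_right p) phi" using cadlag_phi p unfolding cadlag_def by simp
  then obtain b where b: "b > p" "\<forall>y. p < y \<and> y < b \<longrightarrow> \<bar>phi y - phi p\<bar> < e / 4"
    using continuous_at_right_D[of p phi "e / 4"] e by auto
  have "\<bar>upper_push z - upper_push p\<bar> \<le> 2 * (e / 4)" if z: "p < z" "z < b" for z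
  proof (rule upper_push_oscillation[OF p])
    show "p \<le> z" "0 < e / 4" using z e by auto
    fix u assume u: "p \<le> u" "u \<le> z"
    show "\<bar>phi u - phi p\<bar> \<le> e / 4"
    proof (cases "u = p")
      case False
      then have "p < u" "u < b" using u z by auto
      then have "\<bar>phi u - phi p\<bar> < e / 4" using b(2) by blast
      then show ?thesis by simp
    qed (use e in simp)
  qed
  then show "\<exists>b>p. \<forall>y. p < y \<and> y < b \<longrightarrow> \<bar>upper_push y - upper_push p\<bar> < e"
    using b(1) e by (intro exI[of _ b]) force
qed

lemma upper_push_left_limit:
  assumes p: "0 < p"
  shows "\<exists>l. (upper_push \<longlongrightarrow> l) (at_left p)"
proof (rule left_limit_exists_Cauchy)
  obtain Lp where Lp: "(phi \<longlongrightarrow> Lp) (at_left p)" using cadlag_phi p unfolding cadlag_def by blast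
  fix e :: real assume e: "0 < e"
  obtain b where b: "b < p" "\<forall>y. b < y \<and> y < p \<longrightarrow> \<bar>phi y - Lp\<bar> < e / 4"
    using tendsto_at_left_D[OF Lp, of "e / 4"] e by auto
  define b' where "b' = max b 0"
  have b': "b' < p" "0 \<le> b'" "b \<le> b'" using b(1) p unfolding b'_def by auto
  have close: "\<bar>upper_push z - upper_push y\<bar> \<le> 2 * (e / 4)" if yz: "b' < y" "y \<le> z" "z < p" for y z
  proof (rule upper_push_oscillation)
    show "0 \<le> y" "y \<le> z" "0 < e / 4" using yz b' e by auto
    fix u assume "y \<le> u" "u \<le> z"
    then have "b < u" "u < p" using yz b' by auto
    then have "\<bar>phi u - Lp\<bar> < e / 4" using b(2) by blast
    then show "\<bar>phi u - Lp\<bar> \<le> e / 4" by simp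
  qed
  have "\<bar>upper_push y - upper_push z\<bar> < e" if yz: "b' < y" "y < p" "b' < z" "z < p" for y z
  proof (cases "y \<le> z")
    case True
    then show ?thesis using close[of y z] yz e by (simp add: abs_minus_commute)
  next
    case False
    then show ?thesis using close[of z y] yz e by simp
  qed
  then show "\<exists>b<p. \<forall>y z. b < y \<and> y < p \<and> b < z \<and> z < p \<longrightarrow> \<bar>upper_push y - upper_push z\<bar> < e"
    using b'(1) by blast
qed

lemma cadlag_upper_push: "cadlag upper_push"
  unfolding cadlag_def using upper_push_continuous_at_right upper_push_left_limit by blast

definition phibar :: "real \<Rightarrow> real" where "phibar t = phi t - upper_push t"
definition etabar :: "real \<Rightarrow> real" where "etabar t = phibar t - \<psi> t"

lemma etabar_eq: "etabar t = lower_push t - upper_push t"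
  unfolding etabar_def phibar_def phi_eq by simp

lemma cadlag_phibar: "cadlag phibar"
  unfolding phibar_def[abs_def] by (rule cadlag_diff[OF cadlag_phi cadlag_upper_push])

lemma cadlag_etabar: "cadlag etabar"
  unfolding etabar_def[abs_def] by (rule cadlag_diff[OF cadlag_phibar cadlag_psi])

lemma phibar_bounds: "0 \<le> t \<Longrightarrow> 0 \<le> phibar t \<and> phibar t \<le> a"
  using upper_push_le_phi[of t] excess_le_upper_push[of t] unfolding phibar_def excess_def by auto

lemma phi_bounded: "0 \<le> t \<Longrightarrow> \<exists>K. \<forall>u. 0 \<le> u \<and> u \<le> t \<longrightarrow> phi u \<le> K"
  using cadlag_bounded[OF cadlag_phi] by (metis abs_le_iff)

(* While phibar stays above some e > 0 on (s,t], -psi stays below lower_push t - e there, so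
   lower_push does not increase on (s,t]; and upper_push, a supremum of minima with the
   infimum of phi, does not decrease. *)
lemma lower_push_flat_off_zero:
  assumes e: "0 < e" and st: "0 \<le> s" "s \<le> t" and pos: "\<And>r. s < r \<Longrightarrow> r \<le> t \<Longrightarrow> e \<le> phibar r"
  shows "lower_push t \<le> lower_push s"
proof -
  have "lower_push t \<le> max (lower_push s) (lower_push t - e)"
  proof (rule lower_push_le)
    show "0 \<le> t" using st by simp
    fix q assume q: "0 \<le> q" "q \<le> t"
    show "deficit q \<le> max (lower_push s) (lower_push t - e)"
    proof (cases "q \<le> s")
      case True
      then show ?thesis using deficit_le_lower_push[OF q(1) True] by simp
    next
      case False
      have "e \<le> phibar q" using pos[of q] False q by simp
      moreover have "0 \<le> upper_push q" using upper_push_nonneg q by simp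
      moreover have "lower_push q \<le> lower_push t" using lower_push_mono q by simp
      ultimately have "- \<psi> q \<le> lower_push t - e" unfolding phibar_def phi_eq by simp
      moreover have "0 \<le> lower_push s" using lower_push_nonneg st by simp
      ultimately show ?thesis unfolding deficit_def
        by (intro max.boundedI) (auto intro: order_trans[OF _ max.cobounded2] order_trans[OF _ max.cobounded1])
    qed
  qed
  then show ?thesis using e by (simp add: max_def split: if_splits)
qed

lemma upper_push_nondec_off_zero:
  assumes e: "0 < e" and st: "0 \<le> s" "s < t" and pos: "\<And>r. s < r \<Longrightarrow> r \<le> t \<Longrightarrow> e \<le> phibar r"
  shows "upper_push s \<le> upper_push t"
proof -
  define m where "m = (INF u\<in>{s<..t}. phi u)"
  have m_le: "m \<le> phi u" if "s < u" "u \<le> t" for u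
    unfolding m_def by (rule INF_lower_bounded[where M=0]) (use that st phi_nonneg in auto)
  have push_r: "min (upper_push s) m \<le> upper_push r" if "s < r" "r \<le> t" for r
    by (rule upper_push_lower_bound) (use that st m_le in auto)
  have "upper_push s \<le> m"
  proof (rule ccontr)
    assume "\<not> upper_push s \<le> m"
    then have "e + m \<le> phi r" if "s < r" "r \<le> t" for r
      using push_r[OF that] pos[OF that] unfolding phibar_def by simp
    then have "e + m \<le> m" unfolding m_def using st(2) by (intro INF_greatest_nonempty) auto
    then show False using e by simp
  qed
  then show ?thesis using push_r[OF st(2) order_refl] by simp
qed

lemma etabar_noninc_off_zero:
  assumes "0 < e" "0 \<le> s" "s \<le> t" "\<And>r. s < r \<Longrightarrow> r \<le> t \<Longrightarrow> e \<le> phibar r"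
  shows "etabar t \<le> etabar s"
proof (cases "s = t")
  case False
  then show ?thesis unfolding etabar_eq
    using lower_push_flat_off_zero[OF assms] upper_push_nondec_off_zero[of e s t] assms by simp
qed simp

(* While phibar stays below a - e on (s,t], the excess there is at least e below the
   running value of upper_push, which therefore cannot increase. *)
lemma upper_push_noninc_off_top:
  assumes e: "0 < e" and st: "0 \<le> s" "s < t" and low: "\<And>r. s < r \<Longrightarrow> r \<le> t \<Longrightarrow> phibar r \<le> a - e"
  shows "upper_push t \<le> upper_push s"
proof -
  obtain K where K: "\<forall>u. 0 \<le> u \<and> u \<le> t \<longrightarrow> phi u \<le> K" using phi_bounded st by fastforce
  have bounded: "upper_push r \<le> K" if r: "s < r" "r \<le> t" for r
  proof -
    have "0 \<le> r" using r st by simp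
    then have "upper_push r \<le> phi r" "phi r \<le> K" using upper_push_le_phi[of r] K r by auto
    then show ?thesis by simp
  qed
  define V where "V = (SUP r\<in>{s<..t}. upper_push r)"
  have le_V: "upper_push r \<le> V" if "s < r" "r \<le> t" for r
    unfolding V_def by (rule SUP_upper_bounded[where M=K]) (use that bounded in auto)
  have "upper_push r \<le> max (upper_push s) (V - e)" if r: "s < r" "r \<le> t" for r
  proof -
    have "upper_push r \<le> max (upper_push s) (max (V - e) 0)"
    proof (rule upper_push_upper_bound)
      show "0 \<le> s" "s \<le> r" using st r by auto
      fix q assume q: "s < q" "q \<le> r"
      have "phibar q \<le> a - e" using low q r by simp
      moreover have "upper_push q \<le> V" using le_V q r by simp
      ultimately have "phi q - a \<le> V - e" unfolding phibar_def by simp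
      then show "excess q \<le> max (V - e) 0" unfolding excess_def by simp
    qed
    then show ?thesis using upper_push_nonneg[OF st(1)] by (simp add: max_def split: if_splits)
  qed
  then have "V \<le> max (upper_push s) (V - e)" unfolding V_def using st(2)
    by (intro SUP_least_nonempty) auto
  then have "V \<le> upper_push s" using e by (simp add: max_def split: if_splits)
  then show ?thesis using le_V[OF st(2) order_refl] by simp
qed

lemma etabar_nondec_off_top:
  assumes "0 < e" "0 \<le> s" "s \<le> t" "\<And>r. s < r \<Longrightarrow> r \<le> t \<Longrightarrow> phibar r \<le> a - e"
  shows "etabar s \<le> etabar t"
proof (cases "s = t")
  case False
  then show ?thesis unfolding etabar_eq
    using lower_push_mono[of s t] upper_push_noninc_off_top[of e s t] assms by simp
qed simp

lemma values_at_0: "etabar 0 = deficit 0 - excess 0" "phibar 0 = phi 0 - excess 0" "phi 0 = \<psi> 0 + deficit 0"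
  unfolding etabar_eq phibar_def phi_eq lower_push_0 upper_push_0 by simp_all

lemma etabar_start_off_zero: "0 < phibar 0 \<Longrightarrow> etabar 0 \<le> 0"
proof -
  assume "0 < phibar 0"
  then have "0 < phi 0" using values_at_0 excess_nonneg[of 0] by simp
  then have "0 < \<psi> 0" using values_at_0(3) unfolding deficit_def by (simp add: max_def split: if_splits)
  then have "deficit 0 = 0" unfolding deficit_def by simp
  then show ?thesis using values_at_0(1) excess_nonneg[of 0] by simp
qed

lemma etabar_start_off_top: "phibar 0 < a \<Longrightarrow> 0 \<le> etabar 0"
proof -
  assume "phibar 0 < a"
  then have "excess 0 = 0" using values_at_0(2) unfolding excess_def by (simp add: max_def split: if_splits)
  then show ?thesis using values_at_0(1) deficit_nonneg[of 0] by simp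
qed

(* Where phi t > 0, the regulator lower_push has no jump at t from the left: either it is
   small, or its value at t is almost attained by the deficit at some earlier time. *)
lemma lower_push_left_near:
  assumes t: "0 < t" and pos: "0 < phi t" and e: "0 < e"
  shows "\<exists>b<t. 0 \<le> b \<and> (\<forall>q. b < q \<longrightarrow> q < t \<longrightarrow> lower_push t - e \<le> lower_push q)"
proof (cases "lower_push t \<le> e")
  case True
  have "lower_push t - e \<le> lower_push q" if "0 < q" for q using lower_push_nonneg[of q] that True by simp
  then show ?thesis using t by (intro exI[of _ 0]) auto
next
  case False
  have t0: "0 \<le> t" using t by simp
  have "deficit t < lower_push t" using pos False e unfolding deficit_def phi_eq by simp
  define d where "d = min e (lower_push t - deficit t)"
  have d: "0 < d" "d \<le> e" "deficit t \<le> lower_push t - d"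
    using \<open>deficit t < lower_push t\<close> e unfolding d_def by auto
  obtain M where M: "\<forall>s. 0 \<le> s \<and> s \<le> t \<longrightarrow> deficit s \<le> M" using deficit_bounded t0 by blast
  have "lower_push t - d < (SUP s\<in>{0..t}. deficit s)" using d unfolding lower_push_def by simp
  then obtain q0 where q0: "q0 \<in> {0..t}" "lower_push t - d < deficit q0"
    using less_SUP_bounded[of "{0..t}" deficit M "lower_push t - d"] M t0 by force
  have "q0 \<noteq> t" using q0 d by auto
  then have "q0 < t" using q0 by simp
  moreover have "lower_push t - e \<le> lower_push q" if "q0 < q" "q < t" for q
    using deficit_le_lower_push[of q0 q] q0 that d by simp
  ultimately show ?thesis using q0 by (intro exI[of _ q0]) auto
qed

lemma etabar_left_near_off_zero:
  assumes t: "0 < t" and xt: "0 < phibar t" and e: "0 < e"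
  shows "\<exists>b<t. \<forall>q. b < q \<longrightarrow> q < t \<longrightarrow> etabar t - 3 * e \<le> etabar q"
proof -
  have t0: "0 \<le> t" using t by simp
  have "0 < phi t" using xt upper_push_nonneg[OF t0] unfolding phibar_def by simp
  then obtain b1 where b1: "b1 < t" "0 \<le> b1" "\<forall>q. b1 < q \<longrightarrow> q < t \<longrightarrow> lower_push t - e \<le> lower_push q"
    using lower_push_left_near[OF t _ e] by blast
  obtain Lp where Lp: "(phi \<longlongrightarrow> Lp) (at_left t)" using cadlag_phi t unfolding cadlag_def by blast
  obtain b where b: "b < t" "\<forall>y. b < y \<and> y < t \<longrightarrow> \<bar>phi y - Lp\<bar> < e"
    using tendsto_at_left_D[OF Lp e] by blast
  define b2 where "b2 = max b b1"
  have b2: "b2 < t" "0 \<le> b2" "b \<le> b2" "b1 \<le> b2" using b b1 unfolding b2_def by auto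
  have "etabar t - 3 * e \<le> etabar q" if q: "b2 < q" "q < t" for q
  proof -
    have q0: "0 \<le> q" using q b2 by simp
    have "min (upper_push q) (min (Lp - e) (phi t)) \<le> upper_push t"
    proof (rule upper_push_lower_bound)
      show "0 \<le> q" "q \<le> t" using q0 q by auto
      fix u assume u: "q < u" "u \<le> t"
      show "min (Lp - e) (phi t) \<le> phi u"
      proof (cases "u = t")
        case False
        then have "\<bar>phi u - Lp\<bar> < e" using b(2) u q b2 by auto
        then show ?thesis by (simp add: abs_less_iff min.coboundedI1)
      qed simp
    qed
    moreover have "upper_push q \<le> phi q" using upper_push_le_phi[OF q0] .
    moreover have "\<bar>phi q - Lp\<bar> < e" using b(2) q b2 by auto
    moreover have "upper_push t < phi t" using xt unfolding phibar_def by simp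
    ultimately have "upper_push q - 2 * e \<le> upper_push t"
      unfolding min_le_iff_disj by (auto simp: abs_less_iff)
    moreover have "lower_push t - e \<le> lower_push q" using b1(3) q b2 by auto
    ultimately show ?thesis unfolding etabar_eq by simp
  qed
  then show ?thesis using b2(1) by blast
qed

lemma etabar_jump_off_zero:
  assumes t: "0 < t" and xt: "0 < phibar t" and L: "(etabar \<longlongrightarrow> L) (at_left t)"
  shows "etabar t \<le> L"
proof (rule field_le_epsilon)
  fix e :: real assume e: "0 < e"
  define e' where "e' = e / 3"
  have e': "0 < e'" "e = 3 * e'" using e by (simp_all add: e'_def)
  obtain b where b: "b < t" "\<forall>q. b < q \<longrightarrow> q < t \<longrightarrow> etabar t - 3 * e' \<le> etabar q" using etabar_left_near_off_zero[OF t xt e'(1)] by blast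
  have "etabar t - 3 * e' \<le> L"
  proof (rule tendsto_lowerbound[OF L])
    show "eventually (\<lambda>q. etabar t - 3 * e' \<le> etabar q) (at_left t)"
      unfolding eventually_at_left_field using b by blast
  qed simp
  then show "etabar t \<le> L + e" using e' by simp
qed

lemma etabar_left_near_off_top:
  assumes t: "0 < t" and xt: "phibar t < a" and e: "0 < e"
  shows "\<exists>b<t. \<forall>q. b < q \<longrightarrow> q < t \<longrightarrow> etabar q \<le> etabar t + 2 * e"
proof -
  have t0: "0 \<le> t" using t by simp
  obtain Lp where Lp: "(phi \<longlongrightarrow> Lp) (at_left t)" using cadlag_phi t unfolding cadlag_def by blast
  obtain b where b: "b < t" "\<forall>y. b < y \<and> y < t \<longrightarrow> \<bar>phi y - Lp\<bar> < e" using tendsto_at_left_D[OF Lp e] by blast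
  define b2 where "b2 = max b 0"
  have b2: "b2 < t" "0 \<le> b2" "b \<le> b2" using b t unfolding b2_def by auto
  have "etabar q \<le> etabar t + 2 * e" if q: "b2 < q" "q < t" for q
  proof -
    have q0: "0 \<le> q" using q b2 by simp
    have "upper_push t \<le> max (upper_push q) (max (max (Lp - a) 0 + e) (excess t))"
    proof (rule upper_push_upper_bound)
      show "0 \<le> q" "q \<le> t" using q0 q by auto
      fix r assume r: "q < r" "r \<le> t"
      show "excess r \<le> max (max (Lp - a) 0 + e) (excess t)"
      proof (cases "r = t")
        case False
        then have "\<bar>phi r - Lp\<bar> < e" using b(2) r q b2 by auto
        then have "\<bar>(phi r - a) - (Lp - a)\<bar> \<le> e" by simp
        then have "excess r \<le> max (Lp - a) 0 + e" unfolding excess_def by (rule max_zero_lipschitz)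
        then show ?thesis by (simp add: le_max_iff_disj)
      qed simp
    qed
    moreover have "max (Lp - a) 0 \<le> excess q + e"
    proof -
      have "\<bar>phi q - Lp\<bar> < e" using b(2) q b2 by auto
      then have "\<bar>(Lp - a) - (phi q - a)\<bar> \<le> e" by simp
      then show ?thesis unfolding excess_def by (rule max_zero_lipschitz)
    qed
    moreover have "excess q \<le> upper_push q" using excess_le_upper_push[OF q0] .
    moreover have "0 \<le> upper_push q" using upper_push_nonneg[OF q0] .
    moreover have "\<not> (0 < phi t - a \<and> upper_push t \<le> phi t - a)" using xt unfolding phibar_def by auto
    ultimately have "upper_push t \<le> upper_push q + 2 * e" unfolding le_max_iff_disj excess_def[of t] using e by (auto simp: max_def split: if_splits)
    moreover have "lower_push q \<le> lower_push t" using lower_push_mono q0 q by simp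
    ultimately show ?thesis unfolding etabar_eq by simp
  qed
  then show ?thesis using b2(1) by blast
qed

lemma etabar_jump_off_top:
  assumes t: "0 < t" and xt: "phibar t < a" and L: "(etabar \<longlongrightarrow> L) (at_left t)"
  shows "L \<le> etabar t"
proof -
  have "L \<le> etabar t + e" if e: "0 < e" for e
  proof -
    define e' where "e' = e / 2"
    have e': "0 < e'" "e = 2 * e'" using e by (simp_all add: e'_def)
    obtain b where b: "b < t" "\<forall>q. b < q \<longrightarrow> q < t \<longrightarrow> etabar q \<le> etabar t + 2 * e'" using etabar_left_near_off_top[OF t xt e'(1)] by blast
    have "L \<le> etabar t + 2 * e'"
    proof (rule tendsto_upperbound[OF L])
      show "eventually (\<lambda>q. etabar q \<le> etabar t + 2 * e') (at_left t)"
        unfolding eventually_at_left_field using b by blast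
    qed simp
    then show ?thesis using e' by simp
  qed
  then show ?thesis by (rule field_le_epsilon)
qed


theorem skorokhod_phibar: "skorokhod a \<psi> phibar etabar"
proof -
  interpret sp_criterion a phibar etabar
  proof
    show "0 < a" by (rule a_pos)
  qed (use cadlag_phibar cadlag_etabar phibar_bounds etabar_noninc_off_zero
      etabar_nondec_off_top etabar_jump_off_zero etabar_jump_off_top
      etabar_start_off_zero etabar_start_off_top in auto)
  show ?thesis by (rule skorokhod_solution) (simp add: etabar_def)
qed

end

theorem theorem1p4:
  fixes a :: real and \<psi> :: "real \<Rightarrow> real"
  assumes "a > 0" and "cadlag \<psi>"
  shows "skorokhod a \<psi> (Lambda a (Gamma0 \<psi>)) (\<lambda>t. Lambda a (Gamma0 \<psi>) t - \<psi> t)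
         \<and> (\<forall>t\<ge>0. Gamma0a a \<psi> t = Lambda a (Gamma0 \<psi>) t)"
proof -
  interpret reflection_map a \<psi> using assms by unfold_locales
  have "Lambda a (Gamma0 \<psi>) = phibar" by (rule ext) (simp add: Lambda_eq phibar_def)
  then have solution: "skorokhod a \<psi> (Lambda a (Gamma0 \<psi>)) (\<lambda>t. Lambda a (Gamma0 \<psi>) t - \<psi> t)"
    using skorokhod_phibar unfolding etabar_def[abs_def] by simp
  then show ?thesis using Gamma0a_eq_solution by blast
qed

end
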